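(* Let $X$ be a Hilbert space with inner product $(\cdot,\cdot)$, let $S\subset\mathbb{C}$ be open with $S=\overline{S}$, and let $\mathcal L(\lambda)$, $\lambda\in S$, be a selfadjoint holomorphic family of type (A) on a dense domain $D\subset X$ such that either $\mathcal L(\lambda)$ has compact resolvent, or $\mathcal L(\lambda)=\mathbb{I}-\mathcal B(\lambda)$ where $\mathcal B$ is a compact selfadjoint pencil with trivial kernel for $\lambda\in S\cap\mathbb{R}$. Let $\{\mu_j(\lambda)\}_{j\ge1}$ be real analytic functions and $\{u_j(\lambda)\}_{j\ge1}$ analytic vector-valued functions on $S\cap\mathbb{R}$ such that $\mathcal L(\lambda)u_j(\lambda)=\mu_j(\lambda)u_j(\lambda)$ and $\{u_j(\lambda)\}_{j\ge1}$ is an orthonormal basis of $X$ for each $\lambda\in S\cap\mathbb{R}$. Let $\lambda_0\in S\cap\mathbb{R}$ be a real characteristic value of $\mathcal L$ of finite geometric multiplicity $k>0$, and for $s\ge1$ let $Y_s$ be the span of those $u_j(\lambda_0)$ for which $\mu_j^{(n)}(\lambda_0)=0$ for all $n=0,1,\dots,s-1$. Then a nonzero vector $u^{[0]}$ begins a chain of root vectors for $\lambda_0$ of length $m$ if and only if $u^{[0]}\in Y_m$; and in that case a chain $\{u^{[0]},u^{[1]},\dots,u^{[m-1]}\}$ of length $m$ has the form \[ u^{[r]}=\sum_{d=0}^r\frac{1}{d!}\,\mathcal U_0^{(d)}\mathcal V_0\, w^{[r-d]},\qquad r=0,1,\dots,m-1, \] where $w^{[s]}\in Y_{m-s}$, $\mathcal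 U_0^{(d)}:=\mathcal U^{(d)}(\lambda_0)$ and $\mathcal V_0:=\mathcal V(\lambda_0)$.
   Context: A holomorphic family of type (A) on $X$, defined for $\lambda\in S$, is a family of closed operators $\mathcal L(\lambda):D\to X$ with domain $D$ independent of $\lambda$ such that $\lambda\mapsto\mathcal L(\lambda)u$ is holomorphic for every $u\in D$. It is selfadjoint if $S=\overline S$ and $\mathcal L(\overline\lambda)=\mathcal L(\lambda)^*$. A characteristic value is a $\lambda_0\in S$ with $\ker\mathcal L(\lambda_0)\neq\{0\}$; its geometric multiplicity is $\dim\ker\mathcal L(\lambda_0)$. With $\mathcal L^{(\ell)}(\lambda_0)u:=\frac{d^\ell}{d\lambda^\ell}(\mathcal L(\lambda)u)|_{\lambda=\lambda_0}$, a chain of root vectors of length $m$ for $\lambda_0$ is a sequence $u^{[0]},\dots,u^{[m-1]}\in D$ with $u^{[0]}\ne0$, $\mathcal L(\lambda_0)u^{[0]}=0$ and $\sum_{\ell=0}^q\frac1{\ell!}\mathcal L^{(\ell)}(\lambda_0)u^{[q-\ell]}=0$ for $q=1,\dots,m-1$. For $\lambda\in S\cap\mathbb{R}$, $\mathcal V(\lambda):X\to\ell_2$ is $\mathcal V(\lambda)w:=\{(w,u_j(\lambda))\}_{j\ge1}$ and $\mathcal U(\lambda):\ell_2\to X$ is $\mathcal U(\lambda)\{a_j\}:=\sum_j a_ju_j(\lambda)$; its derivatives are $\mathcal U^{(n)}(\lambda)\{a_j\}:=\sum_j a_ju_j^{(n)}(\lambda)$, applied to sequences with only finitely many nonzero entries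 (note $\mathcal V_0w$ has at most $k$ nonzero entries when $w\in Y_1=\ker\mathcal L(\lambda_0)$). *)

theory Defs
  imports "HOL-Analysis.Analysis"
begin

class complex_inner = real_normed_vector +
  fixes scaleC :: "complex \<Rightarrow> 'a \<Rightarrow> 'a"  (infixr "*\<^sub>C" 75)
  fixes cinner :: "'a \<Rightarrow> 'a \<Rightarrow> complex"
  assumes scaleC_of_real: "scaleC (complex_of_real r) x = scaleR r x"
    and scaleC_add_right: "scaleC a (x + y) = scaleC a x + scaleC a y"
    and scaleC_add_left: "scaleC (a + b) x = scaleC a x + scaleC b x"
    and scaleC_scaleC: "scaleC a (scaleC b x) = scaleC (a * b) x"
    and scaleC_one: "scaleC 1 x = x"
    and cinner_commute: "cinner x y = cnj (cinner y x)"
    and cinner_add_left: "cinner (x + y) z = cinner x z + cinner y z"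
    and cinner_scaleC_left: "cinner (scaleC a x) y = a * cinner x y"
    and cinner_self_real: "Im (cinner x x) = 0"
    and cinner_self_nonneg: "0 \<le> Re (cinner x x)"
    and cinner_self_eq_0: "cinner x x = 0 \<longleftrightarrow> x = 0"
    and norm_eq_sqrt_cinner: "norm x = sqrt (Re (cinner x x))"

definition csubspace :: "'a::complex_inner set \<Rightarrow> bool" where
  "csubspace A \<longleftrightarrow> 0 \<in> A \<and> (\<forall>x\<in>A. \<forall>y\<in>A. x + y \<in> A) \<and> (\<forall>c. \<forall>x\<in>A. c *\<^sub>C x \<in> A)"

definition clinear_on :: "'a::complex_inner set \<Rightarrow> ('a \<Rightarrow> 'b::complex_inner) \<Rightarrow> bool" where
  "clinear_on A f \<longleftrightarrow> (\<forall>x\<in>A. \<forall>y\<in>A. f (x + y) = f x + f y) \<and> (\<forall>c. \<forall>x\<in>A. f (c *\<^sub>C x) = c *\<^sub>C f x)"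

definition cspan :: "'a::complex_inner set \<Rightarrow> 'a set" where
  "cspan A = {\<Sum>a\<in>F. c a *\<^sub>C a | F c. finite F \<and> F \<subseteq> A}"

definition cindependent :: "'a::complex_inner set \<Rightarrow> bool" where
  "cindependent F \<longleftrightarrow> (\<forall>G c. finite G \<and> G \<subseteq> F \<and> (\<Sum>a\<in>G. c a *\<^sub>C a) = 0 \<longrightarrow> (\<forall>a\<in>G. c a = 0))"

definition has_cdim :: "'a::complex_inner set \<Rightarrow> nat \<Rightarrow> bool" where
  "has_cdim A k \<longleftrightarrow> (\<exists>F. finite F \<and> card F = k \<and> F \<subseteq> A \<and> cindependent F \<and> cspan F = A)"

definition closed_operator :: "'a::complex_inner set \<Rightarrow> ('a \<Rightarrow> 'a) \<Rightarrow> bool" where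
  "closed_operator D T \<longleftrightarrow> closed {(x, T x) | x. x \<in> D}"

text \<open>T' is the Hilbert adjoint of the densely defined operator T with domain D,
  where T' is also defined on D (so T* has domain exactly D and acts as T').\<close>
definition is_adjoint_on :: "'a::complex_inner set \<Rightarrow> ('a \<Rightarrow> 'a) \<Rightarrow> ('a \<Rightarrow> 'a) \<Rightarrow> bool" where
  "is_adjoint_on D T T' \<longleftrightarrow>
     (\<forall>v. v \<in> D \<longleftrightarrow> (\<exists>w. \<forall>x\<in>D. cinner (T x) v = cinner x w)) \<and>
     (\<forall>x\<in>D. \<forall>v\<in>D. cinner (T x) v = cinner x (T' v))"

definition compact_op :: "('a::complex_inner \<Rightarrow> 'a) \<Rightarrow> bool" where
  "compact_op R \<longleftrightarrow> clinear_on UNIV R \<and> (\<forall>B. bounded B \<longrightarrow> compact (closure (R ` B)))"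

definition has_compact_resolvent :: "'a::complex_inner set \<Rightarrow> ('a \<Rightarrow> 'a) \<Rightarrow> bool" where
  "has_compact_resolvent D T \<longleftrightarrow>
     (\<exists>z R. compact_op R \<and> (\<forall>v. R v \<in> D \<and> T (R v) - z *\<^sub>C R v = v) \<and>
            (\<forall>x\<in>D. R (T x - z *\<^sub>C x) = x))"

definition vec_holomorphic_on :: "(complex \<Rightarrow> 'a::complex_inner) \<Rightarrow> complex set \<Rightarrow> bool" where
  "vec_holomorphic_on f S \<longleftrightarrow>
     (\<forall>z\<in>S. \<exists>v. ((\<lambda>w. inverse (w - z) *\<^sub>C (f w - f z)) \<longlongrightarrow> v) (at z))"

definition cderiv :: "(complex \<Rightarrow> 'a::complex_inner) \<Rightarrow> complex \<Rightarrow> 'a" where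
  "cderiv f = (\<lambda>z. Lim (at z) (\<lambda>w. inverse (w - z) *\<^sub>C (f w - f z)))"

definition nderiv :: "nat \<Rightarrow> (real \<Rightarrow> 'a::real_normed_vector) \<Rightarrow> real \<Rightarrow> 'a" where
  "nderiv n f = ((\<lambda>g t. vector_derivative g (at t)) ^^ n) f"

definition real_analytic_on :: "(real \<Rightarrow> 'a::real_normed_vector) \<Rightarrow> real set \<Rightarrow> bool" where
  "real_analytic_on f A \<longleftrightarrow>
     (\<forall>t0\<in>A. \<exists>e>0. \<exists>a. \<forall>t. \<bar>t - t0\<bar> < e \<longrightarrow> (\<lambda>n. (t - t0) ^ n *\<^sub>R a n) sums f t)"

definition holomorphic_family_A :: "complex set \<Rightarrow> 'a::complex_inner set \<Rightarrow> (complex \<Rightarrow> 'a \<Rightarrow> 'a) \<Rightarrow> bool" where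
  "holomorphic_family_A S D L \<longleftrightarrow> open S \<and> csubspace D \<and>
     (\<forall>z\<in>S. clinear_on D (L z) \<and> closed_operator D (L z)) \<and>
     (\<forall>x\<in>D. vec_holomorphic_on (\<lambda>z. L z x) S)"

definition selfadjoint_family :: "complex set \<Rightarrow> 'a::complex_inner set \<Rightarrow> (complex \<Rightarrow> 'a \<Rightarrow> 'a) \<Rightarrow> bool" where
  "selfadjoint_family S D L \<longleftrightarrow> cnj ` S = S \<and> (\<forall>z\<in>S. is_adjoint_on D (L z) (L (cnj z)))"

definition compact_selfadjoint_pencil :: "complex set \<Rightarrow> (complex \<Rightarrow> 'a::complex_inner \<Rightarrow> 'a) \<Rightarrow> bool" where
  "compact_selfadjoint_pencil S B \<longleftrightarrow>
     (\<forall>z\<in>S. compact_op (B z)) \<and> (\<forall>x. vec_holomorphic_on (\<lambda>z. B z x) S) \<and>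
     (\<forall>z\<in>S. \<forall>x y. cinner (B z x) y = cinner x (B (cnj z) y))"

definition root_chain :: "'a::complex_inner set \<Rightarrow> (complex \<Rightarrow> 'a \<Rightarrow> 'a) \<Rightarrow> complex \<Rightarrow> nat \<Rightarrow> (nat \<Rightarrow> 'a) \<Rightarrow> bool" where
  "root_chain D L lam0 m us \<longleftrightarrow>
     (\<forall>i<m. us i \<in> D) \<and> us 0 \<noteq> 0 \<and> L lam0 (us 0) = 0 \<and>
     (\<forall>q. 1 \<le> q \<and> q \<le> m - 1 \<longrightarrow>
        (\<Sum>l=0..q. (1 / fact l) *\<^sub>C (cderiv ^^ l) (\<lambda>z. L z (us (q - l))) lam0) = 0)"

definition Yspace :: "(nat \<Rightarrow> real \<Rightarrow> real) \<Rightarrow> (nat \<Rightarrow> real \<Rightarrow> 'a::complex_inner) \<Rightarrow> real \<Rightarrow> nat \<Rightarrow> 'a set" where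
  "Yspace \<mu> u lam0 s = cspan {u j lam0 | j. \<forall>n<s. nderiv n (\<mu> j) lam0 = 0}"

definition Vop :: "(nat \<Rightarrow> real \<Rightarrow> 'a::complex_inner) \<Rightarrow> real \<Rightarrow> 'a \<Rightarrow> nat \<Rightarrow> complex" where
  "Vop u t w = (\<lambda>j. cinner w (u j t))"

definition Uop :: "nat \<Rightarrow> (nat \<Rightarrow> real \<Rightarrow> 'a::complex_inner) \<Rightarrow> real \<Rightarrow> (nat \<Rightarrow> complex) \<Rightarrow> 'a" where
  "Uop n u t a = (\<Sum>j. a j *\<^sub>C nderiv n (u j) t)"

end

theory Submission
  imports Defs "HOL-Complex_Analysis.Complex_Analysis"
begin

text \<open>Write L_l, e_jn and mu_jn for the Taylor coefficients at lam0 of L, u_j and mu_j.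
  Expanding L(t) u_j(t) = mu_j(t) u_j(t) gives sum_l L_l e_j(q-l) = sum_l mu_jl e_j(q-l) for every q.
  Hence, if each w_s has nonzero coordinates only along those u_j(lam0) for which mu_j vanishes
  to order m - s, the vectors u_r = sum_d sum_j (w_(r-d), u_j(lam0)) e_jd satisfy the chain
  equations up to order m - 1. Conversely a chain is brought into this form by induction on its
  length: pairing the top chain equation with a kernel vector u_i(lam0) annihilates the top vector,
  because the range of the selfadjoint L(lam0) is orthogonal to its kernel; what remains forces
  one more vanishing Taylor coefficient of mu_i on the support of every earlier w_s, and the
  difference between the top vector and the part predicted by the w_s lies in the kernel and
  becomes the new w.

  The analytic input is that weakly holomorphic vector functions are holomorphic, that vector
  power series can be differentiated termwise, and that the derivatives of the u_j stay in the
  domain D, again by selfadjointness.\<close>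

section \<open>Complex inner product spaces\<close>

interpretation complex_vector: vector_space "scaleC :: complex \<Rightarrow> 'a::complex_inner \<Rightarrow> 'a"
  by unfold_locales (simp_all add: scaleC_add_right scaleC_add_left scaleC_scaleC scaleC_one)

lemma cspan_eq_span: "cspan A = complex_vector.span A"
  unfolding complex_vector.span_explicit cspan_def by simp

lemma scaleR_eq_scaleC: "r *\<^sub>R (x::'a::complex_inner) = complex_of_real r *\<^sub>C x"
  by (simp add: scaleC_of_real)

lemma cinner_zero_left [simp]: "cinner 0 (y::'a::complex_inner) = 0"
  using cinner_add_left[of 0 0 y] by simp

lemma cinner_zero_right [simp]: "cinner x (0::'a::complex_inner) = 0"
  by (subst cinner_commute) simp

lemma cinner_add_right: "cinner x (y + z) = cinner x y + cinner x (z::'a::complex_inner)"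
  by (subst (1 2 3) cinner_commute) (simp add: cinner_add_left)

lemma cinner_scaleC_right: "cinner x (a *\<^sub>C y) = cnj a * cinner x (y::'a::complex_inner)"
  by (subst (1 2) cinner_commute) (simp add: cinner_scaleC_left)

lemma cinner_diff_left: "cinner (x - y) z = cinner x z - cinner y (z::'a::complex_inner)"
  using cinner_scaleC_left[of "-1" y z] cinner_add_left[of x "- y" z]
  by (simp add: complex_vector.scale_minus_left)

lemma cinner_diff_right: "cinner x (y - z) = cinner x y - cinner x (z::'a::complex_inner)"
  by (subst (1 2 3) cinner_commute) (simp add: cinner_diff_left)

lemma cinner_sum_left: "cinner (\<Sum>i\<in>A. f i) (y::'a::complex_inner) = (\<Sum>i\<in>A. cinner (f i) y)"
  by (induction A rule: infinite_finite_induct) (auto simp: cinner_add_left)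

lemma cinner_sum_right: "cinner (x::'a::complex_inner) (\<Sum>i\<in>A. f i) = (\<Sum>i\<in>A. cinner x (f i))"
  by (induction A rule: infinite_finite_induct) (auto simp: cinner_add_right)

lemma cinner_scaleR_left: "cinner (r *\<^sub>R x) (y::'a::complex_inner) = complex_of_real r * cinner x y"
  by (simp add: scaleR_eq_scaleC cinner_scaleC_left)

lemma cinner_scaleR_right: "cinner x (r *\<^sub>R (y::'a::complex_inner)) = complex_of_real r * cinner x y"
  by (simp add: scaleR_eq_scaleC cinner_scaleC_right)

lemma cinner_self_norm: "cinner x x = complex_of_real ((norm (x::'a::complex_inner))\<^sup>2)"
proof -
  have "(norm x)\<^sup>2 = Re (cinner x x)"
    using norm_eq_sqrt_cinner[of x] cinner_self_nonneg[of x] by simp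
  then show ?thesis using cinner_self_real[of x] by (simp add: complex_eq_iff)
qed

lemma norm_scaleC: "norm (a *\<^sub>C x) = cmod a * norm (x::'a::complex_inner)"
proof -
  have "cinner (a *\<^sub>C x) (a *\<^sub>C x) = (a * cnj a) * cinner x x"
    by (simp add: cinner_scaleC_left cinner_scaleC_right)
  also have "a * cnj a = complex_of_real ((cmod a)\<^sup>2)"
    by (rule complex_norm_square[symmetric])
  finally have "complex_of_real ((norm (a *\<^sub>C x))\<^sup>2) = complex_of_real ((cmod a * norm x)\<^sup>2)"
    by (simp add: cinner_self_norm power_mult_distrib)
  then have "(norm (a *\<^sub>C x))\<^sup>2 = (cmod a * norm x)\<^sup>2"
    using of_real_eq_iff by blast
  then show ?thesis
    by (simp add: power2_eq_iff_nonneg)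
qed

lemma complex_Cauchy_Schwarz: "cmod (cinner x y) \<le> norm x * norm (y::'a::complex_inner)"
proof (cases "y = 0")
  case True then show ?thesis by simp
next
  case False
  define N where "N = (norm y)\<^sup>2"
  have N: "N > 0" using False by (simp add: N_def)
  define c where "c = cinner x y / complex_of_real N"
  define A where "A = (cmod (cinner x y))\<^sup>2"
  have AA: "cinner x y * cnj (cinner x y) = complex_of_real A"
    unfolding A_def by (rule complex_norm_square[symmetric])
  have yy: "cinner y y = complex_of_real N" by (simp add: N_def cinner_self_norm)
  have yx: "cinner y x = cnj (cinner x y)" by (rule cinner_commute)
  have "cinner (x - c *\<^sub>C y) (x - c *\<^sub>C y) =
        cinner x x - cnj c * cinner x y - c * cinner y x + c * cnj c * cinner y y"
    by (simp add: cinner_diff_left cinner_diff_right cinner_scaleC_left cinner_scaleC_right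
        algebra_simps)
  also have "\<dots> = cinner x x - complex_of_real (A / N)"
  proof -
    have "cnj c * cinner x y = complex_of_real (A / N)"
      unfolding c_def using N AA by (simp add: field_simps mult.commute)
    moreover have "c * cinner y x = complex_of_real (A / N)"
      unfolding c_def yx using N AA by (simp add: field_simps)
    moreover have "c * cnj c * cinner y y = complex_of_real (A / N)"
      unfolding c_def yy using N AA by (simp add: field_simps power2_eq_square)
    ultimately show ?thesis by simp
  qed
  finally have "cinner (x - c *\<^sub>C y) (x - c *\<^sub>C y) = complex_of_real ((norm x)\<^sup>2 - A / N)"
    by (simp add: cinner_self_norm)
  then have "0 \<le> (norm x)\<^sup>2 - A / N"
    by (metis Re_complex_of_real cinner_self_nonneg)
  then have "(cmod (cinner x y))\<^sup>2 \<le> (norm x * norm y)\<^sup>2"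
    using N by (simp add: field_simps A_def N_def power_mult_distrib)
  then show ?thesis
    by (meson norm_ge_zero power2_le_imp_le zero_le_mult_iff)
qed

lemma bounded_bilinear_cinner: "bounded_bilinear (cinner :: 'a::complex_inner \<Rightarrow> _)"
proof (rule bounded_bilinear.intro)
  show "\<exists>K. \<forall>a b::'a. norm (cinner a b) \<le> norm a * norm b * K"
    by (rule exI[of _ 1]) (simp add: complex_Cauchy_Schwarz)
qed (simp_all add: cinner_add_left cinner_add_right cinner_scaleR_left cinner_scaleR_right
       scaleR_conv_of_real)

lemma bounded_linear_cinner_left: "bounded_linear (\<lambda>x. cinner x (y::'a::complex_inner))"
  by (rule bounded_bilinear.bounded_linear_left[OF bounded_bilinear_cinner])

lemma bounded_linear_cinner_right: "bounded_linear (\<lambda>y. cinner (x::'a::complex_inner) y)"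
  by (rule bounded_bilinear.bounded_linear_right[OF bounded_bilinear_cinner])

lemma bounded_bilinear_scaleC: "bounded_bilinear (scaleC :: complex \<Rightarrow> 'a::complex_inner \<Rightarrow> 'a)"
proof (rule bounded_bilinear.intro)
  show "\<exists>K. \<forall>a (b::'a). norm (a *\<^sub>C b) \<le> norm a * norm b * K"
    by (rule exI[of _ 1]) (simp add: norm_scaleC)
qed (simp_all add: scaleC_add_left scaleC_add_right scaleR_eq_scaleC scaleC_scaleC
      scaleR_conv_of_real mult.commute)

lemma finite_orthonormal_in_span:
  fixes b :: "nat \<Rightarrow> 'a::complex_inner"
  assumes orth: "\<And>i j. cinner (b i) (b j) = (if i = j then 1 else 0)"
    and F: "finite F" and sub: "\<And>j. j \<in> J \<Longrightarrow> b j \<in> cspan F"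
  shows "finite J"
proof -
  have binj: "inj b"
    using orth by (metis inj_def one_neq_zero)
  have ind: "complex_vector.independent (b ` J)"
    unfolding complex_vector.independent_explicit_module
  proof (intro allI impI)
    fix t u v assume t: "finite t" "t \<subseteq> b ` J" and s0: "(\<Sum>v\<in>t. u v *\<^sub>C v) = 0" and v: "v \<in> t"
    obtain i where vi: "v = b i" using t v by blast
    have "0 = cinner (\<Sum>a\<in>t. u a *\<^sub>C a) v" using s0 by simp
    also have "\<dots> = (\<Sum>a\<in>t. u a * cinner a v)" by (simp add: cinner_sum_left cinner_scaleC_left)
    also have "\<dots> = u v * cinner v v + (\<Sum>a\<in>t - {v}. u a * cinner a v)"
      using t v by (simp add: sum.remove)
    also have "(\<Sum>a\<in>t - {v}. u a * cinner a v) = 0"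
    proof (intro sum.neutral ballI)
      fix a assume "a \<in> t - {v}"
      then obtain j where "a = b j" "j \<noteq> i" using t vi by blast
      then show "u a * cinner a v = 0" using vi orth by simp
    qed
    also have "cinner v v = 1" using vi orth by simp
    finally show "u v = 0" by simp
  qed
  have "b ` J \<subseteq> complex_vector.span F" using sub by (auto simp: cspan_eq_span)
  then have "finite (b ` J)" using complex_vector.independent_span_bound[OF F ind] by blast
  then show ?thesis using binj finite_imageD inj_on_subset by blast
qed

lemma dense_cinner_eq:
  fixes a b :: "'a::complex_inner"
  assumes dense: "closure D = UNIV" and h: "\<And>v. v \<in> D \<Longrightarrow> cinner a v = cinner b v"
  shows "a = b"
proof -
  have "continuous_on UNIV (cinner (a - b))"
    using bounded_bilinear.bounded_linear_right[OF bounded_bilinear_cinner] by (rule linear_continuous_on)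
  then have cl: "closed {v. cinner (a - b) v = 0}"
    by (intro closed_Collect_eq) auto
  have "D \<subseteq> {v. cinner (a - b) v = 0}"
  proof
    fix v assume "v \<in> D"
    then have "cinner a v = cinner b v" by (rule h)
    then show "v \<in> {v. cinner (a - b) v = 0}" by (simp add: cinner_diff_left)
  qed
  then have "closure D \<subseteq> {v. cinner (a - b) v = 0}" using cl closure_minimal by blast
  then have "cinner (a - b) (a - b) = 0" using dense by blast
  then have "a - b = 0" by (simp only: cinner_self_eq_0)
  then show ?thesis by simp
qed

lemma orth_span_zero:
  fixes d :: "'a::complex_inner"
  assumes h: "\<And>y. y \<in> A \<Longrightarrow> cinner d y = 0" and dense: "closure (cspan A) = UNIV"
  shows "d = 0"
proof -
  have "cinner d y = 0" if y: "y \<in> cspan A" for y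
  proof -
    from y obtain F c where F: "F \<subseteq> A" and yF: "y = (\<Sum>a\<in>F. c a *\<^sub>C a)"
      unfolding cspan_def by blast
    have "cinner d (\<Sum>a\<in>F. c a *\<^sub>C a) = (\<Sum>a\<in>F. cnj (c a) * cinner d a)"
      by (simp add: cinner_sum_right cinner_scaleC_right)
    also have "\<dots> = 0"
    proof (rule sum.neutral, rule ballI)
      fix a assume "a \<in> F"
      then have "cinner d a = 0" using F h by blast
      then show "cnj (c a) * cinner d a = 0" by simp
    qed
    finally show ?thesis using yF by simp
  qed
  then have "\<And>v. v \<in> cspan A \<Longrightarrow> cinner d v = cinner 0 v" by simp
  then show ?thesis by (rule dense_cinner_eq[OF dense])
qed

section \<open>Holomorphic vector-valued functions\<close>

lemma Cauchy_inequality_ball: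
  fixes \<phi> :: "complex \<Rightarrow> complex"
  assumes hol: "\<phi> holomorphic_on ball z0 R" and bnd: "\<And>w. w \<in> ball z0 R \<Longrightarrow> cmod (\<phi> w) \<le> B"
    and r: "r > 0" and z: "z \<in> ball z0 (R - r)"
  shows "cmod ((deriv ^^ n) \<phi> z) \<le> fact n * B / r ^ n"
proof (rule Cauchy_inequality)
  have sub: "cball z r \<subseteq> ball z0 R"
  proof
    fix x assume "x \<in> cball z r"
    then show "x \<in> ball z0 R" using z dist_triangle[of z0 x z] by simp
  qed
  then show "\<phi> holomorphic_on ball z r" "continuous_on (cball z r) \<phi>"
    using hol ball_subset_cball holomorphic_on_imp_continuous_on
    by (meson holomorphic_on_subset order_trans continuous_on_subset)+
  show "norm (\<phi> x) \<le> B" if "norm (z - x) = r" for x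
    using sub that by (intro bnd) (auto simp: dist_norm)
qed (use r in simp)

text \<open>The constant comes from two Cauchy estimates on balls of radius R/4: one bounding
  the second derivative of \<phi>, one bounding the derivative of the difference quotient of \<phi>'.\<close>
lemma deriv_quotient_lipschitz:
  fixes \<phi> :: "complex \<Rightarrow> complex"
  assumes hol: "\<phi> holomorphic_on ball z0 R" and R: "R > 0"
    and bnd: "\<And>w. w \<in> ball z0 R \<Longrightarrow> cmod (\<phi> w) \<le> B"
    and w: "w \<in> ball z0 (R/4)" "w \<noteq> z0" and w': "w' \<in> ball z0 (R/4)" "w' \<noteq> z0"
  shows "cmod ((deriv \<phi> w - deriv \<phi> z0) / (w - z0) - (deriv \<phi> w' - deriv \<phi> z0) / (w' - z0))
           \<le> 128 * B / R^3 * cmod (w - w')"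
proof -
  define F where "F = deriv \<phi>"
  have holF: "F holomorphic_on ball z0 R" unfolding F_def by (rule holomorphic_deriv[OF hol open_ball])
  have bound2: "cmod (deriv F z) \<le> 32 * B / R^2" if z: "z \<in> ball z0 (R/2)" for z
  proof -
    have "cmod ((deriv ^^ 2) \<phi> z) \<le> fact 2 * B / (R/4)^2"
      using z R by (intro Cauchy_inequality_ball[OF hol bnd]) auto
    then show ?thesis by (simp add: F_def numeral_2_eq_2 power2_eq_square field_simps)
  qed
  define P where "P = (\<lambda>z. if z = z0 then deriv F z0 else (F z - F z0) / (z - z0))"
  have holP: "P holomorphic_on ball z0 R" unfolding P_def by (rule pole_lemma_open[OF holF open_ball])
  have boundP: "cmod (P z) \<le> 32 * B / R^2" if z: "z \<in> ball z0 (R/2)" for z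
  proof (cases "z = z0")
    case True then show ?thesis using bound2 z by (simp add: P_def)
  next
    case False
    have "norm (F z - F z0) \<le> 32 * B / R^2 * norm (z - z0)"
    proof (rule field_differentiable_bound[of "ball z0 (R/2)"])
      show "(F has_field_derivative deriv F x) (at x within ball z0 (R / 2))" if "x \<in> ball z0 (R / 2)" for x
        using that R by (intro holomorphic_derivI[OF holF open_ball]) auto
    qed (use bound2 z R in auto)
    then show ?thesis using False by (simp add: P_def norm_divide field_simps)
  qed
  have boundP': "cmod (deriv P z) \<le> 128 * B / R^3" if z: "z \<in> ball z0 (R/4)" for z
  proof -
    have "ball z0 (R/2) \<subseteq> ball z0 R" using R by (intro subset_ball) simp
    then have "cmod ((deriv ^^ 1) P z) \<le> fact 1 * (32 * B / R^2) / (R/4) ^ 1"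
      using z R boundP holomorphic_on_subset[OF holP]
      by (intro Cauchy_inequality_ball[of P z0 "R/2"]) auto
    then show ?thesis by (simp add: field_simps power3_eq_cube power2_eq_square)
  qed
  have "norm (P w - P w') \<le> 128 * B / R^3 * norm (w - w')"
  proof (rule field_differentiable_bound[of "ball z0 (R/4)"])
    show "(P has_field_derivative deriv P x) (at x within ball z0 (R / 4))" if "x \<in> ball z0 (R / 4)" for x
      using that R by (intro holomorphic_derivI[OF holP open_ball]) auto
  qed (use boundP' w w' in auto)
  then show ?thesis using w w' by (simp add: P_def F_def)
qed

lemma lipschitz_punctured_ball_imp_tendsto:
  fixes Q :: "complex \<Rightarrow> 'a::complete_space"
  assumes "\<delta> > 0" and "lipschitz_on C (ball z0 \<delta> - {z0}) Q"
  shows "\<exists>v. (Q \<longlongrightarrow> v) (at z0)"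
proof -
  have "z0 \<in> closure (ball z0 \<delta> - {z0})"
    using assms(1) islimpt_in_closure[of z0 "ball z0 \<delta>"] by (simp add: islimpt_ball)
  then obtain v where "(Q \<longlongrightarrow> v) (at z0 within ball z0 \<delta> - {z0})"
    using uniformly_continuous_on_extension_at_closure lipschitz_on_uniformly_continuous assms(2) by metis
  moreover have "at z0 within ball z0 \<delta> - {z0} = at z0 within ball z0 \<delta>"
    by (simp add: at_within_def Un_absorb flip: Diff_Un)
  ultimately show ?thesis using at_within_ball[OF assms(1), of z0] assms(1) by auto
qed

definition cdiff_quot :: "(complex \<Rightarrow> 'a::complex_inner) \<Rightarrow> complex \<Rightarrow> complex \<Rightarrow> 'a" where
  "cdiff_quot g z w = inverse (w - z) *\<^sub>C (g w - g z)"

lemma cdiff_quot_tendsto_cderiv: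
  assumes "vec_holomorphic_on g S" "z \<in> S"
  shows "(cdiff_quot g z \<longlongrightarrow> cderiv g z) (at z)"
proof -
  obtain v where v: "((\<lambda>w. inverse (w - z) *\<^sub>C (g w - g z)) \<longlongrightarrow> v) (at z)"
    using assms unfolding vec_holomorphic_on_def by blast
  then have "cderiv g z = v" unfolding cderiv_def by (intro tendsto_Lim) auto
  moreover have "cdiff_quot g z = (\<lambda>w. inverse (w - z) *\<^sub>C (g w - g z))" by (rule ext) (simp add: cdiff_quot_def)
  ultimately show ?thesis using v by simp
qed

lemma vec_holomorphic_on_imp_isCont:
  assumes "vec_holomorphic_on g S" "z \<in> S"
  shows "isCont g z"
proof -
  have "((\<lambda>w. (w - z) *\<^sub>C cdiff_quot g z w) \<longlongrightarrow> (z - z) *\<^sub>C cderiv g z) (at z)"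
    by (intro bounded_bilinear.tendsto[OF bounded_bilinear_scaleC] tendsto_intros
        cdiff_quot_tendsto_cderiv[OF assms])
  then have "((\<lambda>w. (w - z) *\<^sub>C cdiff_quot g z w) \<longlongrightarrow> 0) (at z)" by simp
  moreover have ev: "eventually (\<lambda>w. (w - z) *\<^sub>C cdiff_quot g z w = g w - g z) (at z)"
    unfolding eventually_at_filter by (auto simp: cdiff_quot_def scaleC_scaleC)
  ultimately have "((\<lambda>w. g w - g z) \<longlongrightarrow> 0) (at z)"
    using tendsto_cong[OF ev] by simp
  then show ?thesis unfolding isCont_def by (simp add: LIM_zero_iff)
qed

lemma cinner_vec_holomorphic_has_field_derivative:
  assumes "vec_holomorphic_on g S" "z \<in> S"
  shows "((\<lambda>w. cinner (g w) y) has_field_derivative cinner (cderiv g z) y) (at z)"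
proof -
  have "((\<lambda>w. cinner (cdiff_quot g z w) y) \<longlongrightarrow> cinner (cderiv g z) y) (at z)"
    by (intro bounded_bilinear.tendsto[OF bounded_bilinear_cinner] tendsto_intros
        cdiff_quot_tendsto_cderiv[OF assms])
  moreover have "cinner (cdiff_quot g z w) y = (cinner (g w) y - cinner (g z) y) / (w - z)" for w
    by (simp add: cdiff_quot_def cinner_scaleC_left cinner_diff_left divide_inverse mult.commute)
  ultimately show ?thesis unfolding has_field_derivative_iff by simp
qed

lemma cinner_vec_holomorphic_holomorphic_on:
  assumes "vec_holomorphic_on g S" "open S"
  shows "(\<lambda>w. cinner (g w) y) holomorphic_on S"
  using cinner_vec_holomorphic_has_field_derivative[OF assms(1)] assms(2)
  by (auto simp: holomorphic_on_def field_differentiable_def at_within_open[of _ S])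

lemma cdiff_quot_cderiv_lipschitz:
  fixes g :: "complex \<Rightarrow> 'a::complex_inner"
  assumes S: "open S" and hol: "vec_holomorphic_on g S"
    and R: "R > 0" "ball z0 R \<subseteq> S" and B: "\<And>w. w \<in> ball z0 R \<Longrightarrow> norm (g w) \<le> B"
  shows "lipschitz_on (128 * B / R^3) (ball z0 (R/4) - {z0}) (cdiff_quot (cderiv g) z0)"
proof (rule lipschitz_onI)
  define C where "C = 128 * B / R^3"
  have "0 \<le> B" using B[of z0] R(1) by (simp add: order_trans[OF norm_ge_zero])
  then show C: "C \<ge> 0" using R by (simp add: C_def)
  fix w w' assume "w \<in> ball z0 (R/4) - {z0}" "w' \<in> ball z0 (R/4) - {z0}"
  then have w: "w \<in> ball z0 (R/4)" "w \<noteq> z0" and w': "w' \<in> ball z0 (R/4)" "w' \<noteq> z0" by auto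
  define d where "d = cdiff_quot (cderiv g) z0 w - cdiff_quot (cderiv g) z0 w'"
  define \<phi> where "\<phi> = (\<lambda>w. cinner (g w) d)"
  have hol\<phi>: "\<phi> holomorphic_on ball z0 R"
    unfolding \<phi>_def by (rule holomorphic_on_subset[OF cinner_vec_holomorphic_holomorphic_on[OF hol S] R(2)])
  have der: "deriv \<phi> x = cinner (cderiv g x) d" if "x \<in> S" for x
    unfolding \<phi>_def by (rule DERIV_imp_deriv[OF cinner_vec_holomorphic_has_field_derivative[OF hol that]])
  have wS: "w \<in> S" "w' \<in> S" "z0 \<in> S" using w w' R by (auto intro!: R(2)[THEN subsetD])
  have "cinner d d = (deriv \<phi> w - deriv \<phi> z0) / (w - z0) - (deriv \<phi> w' - deriv \<phi> z0) / (w' - z0)"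
    by (simp add: d_def der wS cdiff_quot_def cinner_diff_left cinner_scaleC_left divide_inverse mult.commute)
  then have "cmod (cinner d d) \<le> 128 * (B * norm d) / R^3 * cmod (w - w')"
  proof (simp only:, intro deriv_quotient_lipschitz[OF hol\<phi> R(1)] w w')
    fix x assume "x \<in> ball z0 R"
    then have "norm (g x) * norm d \<le> B * norm d" using B by (simp add: mult_right_mono)
    then show "cmod (\<phi> x) \<le> B * norm d"
      unfolding \<phi>_def using complex_Cauchy_Schwarz order_trans by blast
  qed
  moreover have "cmod (cinner d d) = (norm d)^2" unfolding cinner_self_norm norm_of_real by simp
  ultimately have "(norm d)^2 \<le> (C * cmod (w - w')) * norm d"
    by (simp add: C_def mult_ac)
  then have "norm d \<le> C * cmod (w - w')"
    using C by (cases "norm d = 0") (auto simp: power2_eq_square mult_le_cancel_right)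
  then show "dist (cdiff_quot (cderiv g) z0 w) (cdiff_quot (cderiv g) z0 w') \<le> C * dist w w'"
    by (simp add: dist_norm d_def)
qed

text \<open>Weak holomorphy implies strong holomorphy: by the Cauchy estimates for the scalar
  functions \<open>cinner (g w) d\<close>, the difference quotients of \<open>cderiv g\<close> are Lipschitz near each
  point, and completeness provides their limit.\<close>
lemma vec_holomorphic_on_cderiv:
  fixes g :: "complex \<Rightarrow> 'a::{complex_inner,complete_space}"
  assumes S: "open S" and hol: "vec_holomorphic_on g S"
  shows "vec_holomorphic_on (cderiv g) S"
  unfolding vec_holomorphic_on_def
proof
  fix z0 assume z0: "z0 \<in> S"
  obtain R where R: "R > 0" "cball z0 R \<subseteq> S" using open_contains_cball S z0 by blast
  have "continuous_on (cball z0 R) g"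
    using vec_holomorphic_on_imp_isCont[OF hol] R by (intro continuous_at_imp_continuous_on) auto
  then have "compact (g ` cball z0 R)" by (intro compact_continuous_image) auto
  then obtain B where B: "\<And>w. w \<in> cball z0 R \<Longrightarrow> norm (g w) \<le> B"
    by (meson compact_imp_bounded bounded_iff imageI)
  have "ball z0 R \<subseteq> S" using R ball_subset_cball by blast
  then have "lipschitz_on (128 * B / R^3) (ball z0 (R/4) - {z0}) (cdiff_quot (cderiv g) z0)"
    using R B by (intro cdiff_quot_cderiv_lipschitz[OF S hol]) auto
  then have "\<exists>v. (cdiff_quot (cderiv g) z0 \<longlongrightarrow> v) (at z0)"
    by (rule lipschitz_punctured_ball_imp_tendsto[rotated]) (use R in simp)
  then show "\<exists>v. ((\<lambda>w. inverse (w - z0) *\<^sub>C (cderiv g w - cderiv g z0)) \<longlongrightarrow> v) (at z0)"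
    by (simp add: cdiff_quot_def[abs_def])
qed

lemma vec_holomorphic_on_higher_cderiv:
  fixes g :: "complex \<Rightarrow> 'a::{complex_inner,complete_space}"
  assumes S: "open S" and hol: "vec_holomorphic_on g S"
  shows "vec_holomorphic_on ((cderiv ^^ n) g) S"
  by (induction n) (auto simp: hol vec_holomorphic_on_cderiv[OF S])

section \<open>Higher derivatives of functions of a real variable\<close>

lemma has_vector_derivative_iff_diff_quotient:
  "(f has_vector_derivative D) (at x within S) \<longleftrightarrow>
     ((\<lambda>y. inverse (y - x) *\<^sub>R (f y - f x)) \<longlongrightarrow> D) (at x within S)"
proof -
  have "((\<lambda>y. norm (f y - f x - (y - x) *\<^sub>R D) / norm (y - x)) \<longlongrightarrow> 0) (at x within S)
      = ((\<lambda>y. inverse (y - x) *\<^sub>R (f y - f x) - D) \<longlongrightarrow> 0) (at x within S)"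
  proof -
    have "eventually (\<lambda>y. norm (f y - f x - (y - x) *\<^sub>R D) / norm (y - x) =
             norm (inverse (y - x) *\<^sub>R (f y - f x) - D)) (at x within S)"
    proof (rule eventually_at_filter[THEN iffD2], rule always_eventually, intro allI impI)
      fix y assume "y \<noteq> x"
      then have "inverse (y - x) *\<^sub>R ((y - x) *\<^sub>R D) = D" by simp
      then have "inverse (y - x) *\<^sub>R (f y - f x) - D = inverse (y - x) *\<^sub>R (f y - f x - (y - x) *\<^sub>R D)"
        by (simp add: scaleR_diff_right)
      then show "norm (f y - f x - (y - x) *\<^sub>R D) / norm (y - x) = norm (inverse (y - x) *\<^sub>R (f y - f x) - D)"
        by (simp add: divide_inverse mult.commute abs_inverse)
    qed
    then show ?thesis
      by (simp add: tendsto_cong tendsto_norm_zero_iff)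
  qed
  then show ?thesis
    by (simp add: has_vector_derivative_def has_derivative_iff_norm bounded_linear_scaleR_left LIM_zero_iff)
qed


lemma nderiv_0 [simp]: "nderiv 0 f = f"
  by (simp add: nderiv_def)

lemma nderiv_Suc: "nderiv (Suc n) f t = vector_derivative (nderiv n f) (at t)"
  by (simp add: nderiv_def)

lemma vector_derivative_cong_open:
  assumes "open A" "\<And>x. x \<in> A \<Longrightarrow> f x = g x" "t \<in> A"
  shows "vector_derivative f (at t) = vector_derivative g (at t)"
proof -
  have "vector_derivative f (at t within A) = vector_derivative g (at t within A)"
    by (rule vector_derivative_cong_eq) (use assms in \<open>auto intro: always_eventually\<close>)
  then show ?thesis using at_within_open[OF assms(3,1)] by simp
qed

lemma nderiv_cong_open:
  assumes "open A" "\<And>t. t \<in> A \<Longrightarrow> f t = g t" "t \<in> A"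
  shows "nderiv n f t = nderiv n g t"
  using assms(3)
proof (induction n arbitrary: t)
  case (Suc n)
  then show ?case
    unfolding nderiv_Suc by (intro vector_derivative_cong_open[OF assms(1)])
qed (use assms in simp)

definition smooth_on :: "real set \<Rightarrow> (real \<Rightarrow> 'a::real_normed_vector) \<Rightarrow> bool" where
  "smooth_on T f \<longleftrightarrow> (\<forall>n. \<forall>t\<in>T. (nderiv n f has_vector_derivative nderiv (Suc n) f t) (at t))"

lemma smooth_onD: "smooth_on T f \<Longrightarrow> t \<in> T \<Longrightarrow> (nderiv n f has_vector_derivative nderiv (Suc n) f t) (at t)"
  by (auto simp: smooth_on_def)

lemma smooth_on_subset: "smooth_on T f \<Longrightarrow> T' \<subseteq> T \<Longrightarrow> smooth_on T' f"
  by (auto simp: smooth_on_def)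

lemma derivative_tower:
  assumes T: "open T" and S0: "\<And>t. t \<in> T \<Longrightarrow> f t = S 0 t"
    and SD: "\<And>q t. t \<in> T \<Longrightarrow> (S q has_vector_derivative S (Suc q) t) (at t)"
  shows "\<And>t. t \<in> T \<Longrightarrow> nderiv q f t = S q t" and "smooth_on T f"
proof -
  show eq: "nderiv q f t = S q t" if "t \<in> T" for q t
    using that
  proof (induction q arbitrary: t)
    case 0 then show ?case using S0 by simp
  next
    case (Suc q)
    have "vector_derivative (nderiv q f) (at t) = vector_derivative (S q) (at t)"
      using Suc vector_derivative_cong_open[OF T] by blast
    also have "\<dots> = S (Suc q) t" using SD[OF Suc.prems] by (rule vector_derivative_at)
    finally show ?case by (simp only: nderiv_Suc)
  qed
  show "smooth_on T f"
    unfolding smooth_on_def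
  proof (intro allI ballI)
    fix n t assume t: "t \<in> T"
    have "(S n has_vector_derivative S (Suc n) t) (at t)" using SD[OF t] .
    then have "(nderiv n f has_vector_derivative S (Suc n) t) (at t)"
      by (rule has_vector_derivative_transform_within_open[OF _ T t]) (use eq in auto)
    then show "(nderiv n f has_vector_derivative nderiv (Suc n) f t) (at t)"
      using eq[OF t] by simp
  qed
qed

lemma bounded_linear_nderiv:
  assumes T: "open T" and sm: "smooth_on T A" and f: "bounded_linear f"
  shows "\<And>t. t \<in> T \<Longrightarrow> nderiv n (\<lambda>s. f (A s)) t = f (nderiv n A t)"
    and "smooth_on T (\<lambda>s. f (A s))"
proof -
  have SD: "((\<lambda>s. f (nderiv q A s)) has_vector_derivative f (nderiv (Suc q) A t)) (at t)" if "t \<in> T" for q t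
    using bounded_linear.has_vector_derivative[OF f smooth_onD[OF sm that]] .
  show "nderiv n (\<lambda>s. f (A s)) t = f (nderiv n A t)" if "t \<in> T" for t
    by (rule derivative_tower(1)[of T _ "\<lambda>q s. f (nderiv q A s)", OF T _ SD that]) simp_all
  show "smooth_on T (\<lambda>s. f (A s))"
    by (rule derivative_tower(2)[of T _ "\<lambda>q s. f (nderiv q A s)", OF T _ SD]) simp_all
qed

lemma binomial_pascal_sum:
  fixes p :: "nat \<Rightarrow> nat \<Rightarrow> 'b::real_vector"
  shows "(\<Sum>l\<le>q. real (q choose l) *\<^sub>R (p (Suc l) (q - l) + p l (Suc (q - l)))) =
         (\<Sum>l\<le>Suc q. real (Suc q choose l) *\<^sub>R p l (Suc q - l))"
proof -
  have A: "(\<Sum>l\<le>q. real (q choose l) *\<^sub>R p l (Suc (q - l))) =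
           (\<Sum>l\<le>Suc q. real (q choose l) *\<^sub>R p l (Suc q - l))"
    by (simp add: Suc_diff_le)
  also have "\<dots> = p 0 (Suc q) + (\<Sum>l\<le>q. real (q choose Suc l) *\<^sub>R p (Suc l) (q - l))"
    by (subst sum.atMost_Suc_shift) simp
  finally have A': "(\<Sum>l\<le>q. real (q choose l) *\<^sub>R p l (Suc (q - l))) =
      p 0 (Suc q) + (\<Sum>l\<le>q. real (q choose Suc l) *\<^sub>R p (Suc l) (q - l))" .
  have "(\<Sum>l\<le>Suc q. real (Suc q choose l) *\<^sub>R p l (Suc q - l)) =
        p 0 (Suc q) + (\<Sum>l\<le>q. real (Suc q choose Suc l) *\<^sub>R p (Suc l) (q - l))"
    by (subst sum.atMost_Suc_shift) simp
  also have "\<dots> = p 0 (Suc q) + (\<Sum>l\<le>q. real (q choose l) *\<^sub>R p (Suc l) (q - l)) +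
                   (\<Sum>l\<le>q. real (q choose Suc l) *\<^sub>R p (Suc l) (q - l))"
    by (simp add: sum.distrib scaleR_add_left)
  finally show ?thesis using A' by (simp add: scaleR_add_right sum.distrib algebra_simps)
qed

lemma Leibniz_nderiv:
  assumes bb: "bounded_bilinear pr" and T: "open T" and smA: "smooth_on T A" and smB: "smooth_on T B"
  shows "\<And>t. t \<in> T \<Longrightarrow> nderiv q (\<lambda>s. pr (A s) (B s)) t =
            (\<Sum>l\<le>q. real (q choose l) *\<^sub>R pr (nderiv l A t) (nderiv (q - l) B t))"
    and "smooth_on T (\<lambda>s. pr (A s) (B s))"
proof -
  define S where "S = (\<lambda>q t. \<Sum>l\<le>q. real (q choose l) *\<^sub>R pr (nderiv l A t) (nderiv (q - l) B t))"
  have SD: "(S q has_vector_derivative S (Suc q) t) (at t)" if t: "t \<in> T" for q t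
  proof -
    have "(S q has_vector_derivative
           (\<Sum>l\<le>q. real (q choose l) *\<^sub>R (pr (nderiv (Suc l) A t) (nderiv (q - l) B t) +
                                          pr (nderiv l A t) (nderiv (Suc (q - l)) B t)))) (at t)"
      unfolding S_def
    proof (intro has_vector_derivative_sum bounded_linear.has_vector_derivative[OF bounded_linear_scaleR_right])
      fix l
      show "((\<lambda>s. pr (nderiv l A s) (nderiv (q - l) B s)) has_vector_derivative
            pr (nderiv (Suc l) A t) (nderiv (q - l) B t) + pr (nderiv l A t) (nderiv (Suc (q - l)) B t)) (at t)"
        using bounded_bilinear.has_vector_derivative[OF bb smooth_onD[OF smA t] smooth_onD[OF smB t]]
        by (simp add: add.commute)
    qed
    also have "(\<Sum>l\<le>q. real (q choose l) *\<^sub>R (pr (nderiv (Suc l) A t) (nderiv (q - l) B t) +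
                                          pr (nderiv l A t) (nderiv (Suc (q - l)) B t))) = S (Suc q) t"
      unfolding S_def by (rule binomial_pascal_sum[where p = "\<lambda>i j. pr (nderiv i A t) (nderiv j B t)"])
    finally show ?thesis .
  qed
  have "nderiv q (\<lambda>s. pr (A s) (B s)) t = S q t" if "t \<in> T" for t
    by (rule derivative_tower(1)[of T _ S, OF T _ SD that]) (simp add: S_def)
  then show "nderiv q (\<lambda>s. pr (A s) (B s)) t =
            (\<Sum>l\<le>q. real (q choose l) *\<^sub>R pr (nderiv l A t) (nderiv (q - l) B t))" if "t \<in> T" for t
    using that by (simp add: S_def)
  show "smooth_on T (\<lambda>s. pr (A s) (B s))"
    by (rule derivative_tower(2)[of T _ S, OF T _ SD]) (simp add: S_def)
qed

lemma open_real_preimage: "open S \<Longrightarrow> open {t. complex_of_real t \<in> S}"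
  using open_vimage[of S complex_of_real] by (simp add: vimage_def continuous_on_of_real_id)

lemma nderiv_vec_holomorphic_real:
  fixes g :: "complex \<Rightarrow> 'a::{complex_inner,complete_space}"
  assumes S: "open S" and hol: "vec_holomorphic_on g S"
  shows "\<And>t. complex_of_real t \<in> S \<Longrightarrow> nderiv n (\<lambda>s. g (complex_of_real s)) t = (cderiv ^^ n) g (complex_of_real t)"
    and "smooth_on {t. complex_of_real t \<in> S} (\<lambda>s. g (complex_of_real s))"
proof -
  define T where "T = {t. complex_of_real t \<in> S}"
  have T: "open T" unfolding T_def by (rule open_real_preimage[OF S])
  have SD: "((\<lambda>s. (cderiv ^^ q) g (complex_of_real s)) has_vector_derivative
             (cderiv ^^ Suc q) g (complex_of_real t)) (at t)" if t: "t \<in> T" for q t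
  proof -
    let ?G = "(cderiv ^^ q) g"
    have hq: "vec_holomorphic_on ?G S" by (rule vec_holomorphic_on_higher_cderiv[OF S hol])
    have tS: "complex_of_real t \<in> S" using t by (simp add: T_def)
    have lim: "(cdiff_quot ?G (complex_of_real t) \<longlongrightarrow> cderiv ?G (complex_of_real t)) (at (complex_of_real t))"
      by (rule cdiff_quot_tendsto_cderiv[OF hq tS])
    have "((\<lambda>s. cdiff_quot ?G (complex_of_real t) (complex_of_real s)) \<longlongrightarrow> cderiv ?G (complex_of_real t)) (at t)"
    proof (rule LIM_compose2[OF _ lim])
      show "(\<lambda>s. complex_of_real s) \<midarrow>t\<rightarrow> complex_of_real t" by (intro tendsto_intros)
      show "\<exists>d>0. \<forall>x. x \<noteq> t \<and> norm (x - t) < d \<longrightarrow> complex_of_real x \<noteq> complex_of_real t"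
        by (rule exI[of _ 1]) simp
    qed
    moreover have "cdiff_quot ?G (complex_of_real t) (complex_of_real s) =
        inverse (s - t) *\<^sub>R (?G (complex_of_real s) - ?G (complex_of_real t))" for s
      by (simp add: cdiff_quot_def scaleR_eq_scaleC flip: of_real_diff of_real_inverse)
    ultimately show ?thesis
      unfolding has_vector_derivative_iff_diff_quotient by simp
  qed
  show "nderiv n (\<lambda>s. g (complex_of_real s)) t = (cderiv ^^ n) g (complex_of_real t)"
    if "complex_of_real t \<in> S" for t
  proof -
    have "t \<in> T" using that by (simp add: T_def)
    show ?thesis
      by (rule derivative_tower(1)[of T "\<lambda>s. g (complex_of_real s)" "\<lambda>q s. (cderiv ^^ q) g (complex_of_real s)",
           OF T _ SD \<open>t \<in> T\<close>]) simp
  qed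
  have "smooth_on T (\<lambda>s. g (complex_of_real s))"
    by (rule derivative_tower(2)[of T "\<lambda>s. g (complex_of_real s)" "\<lambda>q s. (cderiv ^^ q) g (complex_of_real s)",
           OF T _ SD]) simp
  then show "smooth_on {t. complex_of_real t \<in> S} (\<lambda>s. g (complex_of_real s))"
    by (simp add: T_def)
qed

section \<open>Vector-valued power series\<close>

text \<open>The library states \<open>summable_norm_cancel\<close> and \<open>norm_suminf_le\<close> for class \<open>banach\<close>, which
  does not contain a type variable of sort \<open>{real_normed_vector, complete_space}\<close>.\<close>

lemma summable_norm_cancel_complete:
  fixes f :: "nat \<Rightarrow> 'a::{real_normed_vector,complete_space}"
  assumes "summable (\<lambda>n. norm (f n))"
  shows "summable f"
proof -
  let ?P = "\<lambda>n. \<Sum>i<n. f i" and ?Q = "\<lambda>n. \<Sum>i<n. norm (f i)"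
  have CQ: "Cauchy ?Q" using assms by (simp add: summable_iff_convergent Cauchy_convergent_iff)
  have key: "norm (?P m - ?P n) \<le> \<bar>?Q m - ?Q n\<bar>" for m n
  proof -
    have *: "norm (?P m - ?P n) \<le> \<bar>?Q m - ?Q n\<bar>" if "n \<le> m" for m n
    proof -
      have spl: "sum F {..<m} = sum F {..<n} + sum F {n..<m}" for F :: "nat \<Rightarrow> 'b::comm_monoid_add"
        using that by (metis atLeast0LessThan le0 sum.atLeastLessThan_concat)
      have "?P m - ?P n = (\<Sum>i\<in>{n..<m}. f i)" using spl[of f] by simp
      moreover have "?Q m - ?Q n = (\<Sum>i\<in>{n..<m}. norm (f i))" using spl[of "\<lambda>i. norm (f i)"] by simp
      ultimately show ?thesis using norm_sum[of f "{n..<m}"] by simp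
    qed
    show ?thesis
    proof (cases "n \<le> m")
      case True then show ?thesis by (rule *)
    next
      case False
      then have "norm (?P n - ?P m) \<le> \<bar>?Q n - ?Q m\<bar>" by (intro *) simp
      then show ?thesis by (simp add: norm_minus_commute abs_minus_commute)
    qed
  qed
  have "Cauchy ?P"
    unfolding Cauchy_iff
  proof (intro allI impI)
    fix e :: real assume "e > 0"
    then obtain M where M: "\<forall>m\<ge>M. \<forall>n\<ge>M. norm (?Q m - ?Q n) < e" using CQ unfolding Cauchy_iff by blast
    show "\<exists>M. \<forall>m\<ge>M. \<forall>n\<ge>M. norm (?P m - ?P n) < e"
    proof (intro exI allI impI)
      fix m n assume "m \<ge> M" "n \<ge> M"
      then have "norm (?Q m - ?Q n) < e" using M by blast
      then show "norm (?P m - ?P n) < e" using key[of m n] by simp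
    qed
  qed
  then show ?thesis by (simp add: summable_iff_convergent Cauchy_convergent_iff)
qed

lemma norm_suminf_le_complete:
  fixes f :: "nat \<Rightarrow> 'a::real_normed_vector"
  assumes "summable f" "summable g" "\<And>n. norm (f n) \<le> g n"
  shows "norm (suminf f) \<le> suminf g"
proof -
  have "(\<lambda>n. norm (\<Sum>i<n. f i)) \<longlonglongrightarrow> norm (suminf f)"
    by (intro tendsto_norm summable_LIMSEQ assms)
  moreover have "(\<lambda>n. \<Sum>i<n. g i) \<longlonglongrightarrow> suminf g" by (intro summable_LIMSEQ assms)
  moreover have "norm (\<Sum>i<n. f i) \<le> (\<Sum>i<n. g i)" for n
    using norm_sum[of f "{..<n}"] sum_mono[of "{..<n}" "\<lambda>i. norm (f i)" g] assms(3) by force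
  ultimately show ?thesis by (intro LIMSEQ_le) auto
qed

lemma summable_Suc_times_power:
  fixes q :: real assumes "\<bar>q\<bar> < 1"
  shows "summable (\<lambda>n. real (Suc n) * q ^ n)"
proof -
  have "summable (\<lambda>n. diffs (\<lambda>_. 1::real) n * q ^ n)"
    by (rule termdiff_converges[of q 1]) (use assms in \<open>auto intro: summable_geometric\<close>)
  then show ?thesis by (simp add: diffs_def)
qed

lemma summable_Suc_squared_times_power:
  fixes q :: real assumes "\<bar>q\<bar> < 1"
  shows "summable (\<lambda>n. real (Suc n) ^ 2 * q ^ n)"
proof -
  have "summable (\<lambda>n. diffs (diffs (\<lambda>_. 1::real)) n * \<bar>q\<bar> ^ n)"
  proof (rule termdiff_converges[of "\<bar>q\<bar>" 1])
    fix x :: real assume "norm x < 1"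
    then show "summable (\<lambda>n. diffs (\<lambda>_. 1) n * x ^ n)"
      by (intro termdiff_converges[of x 1]) (auto intro: summable_geometric)
  qed (use assms in auto)
  then have s: "summable (\<lambda>n. real (Suc n) * real (Suc (Suc n)) * \<bar>q\<bar> ^ n)"
    by (simp add: diffs_def mult.assoc)
  show ?thesis
  proof (rule summable_comparison_test[OF _ s])
    show "\<exists>N. \<forall>n\<ge>N. norm (real (Suc n) ^ 2 * q ^ n) \<le> real (Suc n) * real (Suc (Suc n)) * \<bar>q\<bar> ^ n"
      by (auto simp: abs_mult power2_eq_square power_abs intro!: mult_right_mono)
  qed
qed

lemma power_Taylor_remainder_bound:
  fixes x y \<rho> :: real
  assumes \<rho>: "\<rho> > 0" and x: "\<bar>x\<bar> \<le> \<rho>" and y: "\<bar>y\<bar> \<le> \<rho>"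
  shows "\<bar>y ^ Suc n - x ^ Suc n - real (Suc n) * x ^ n * (y - x)\<bar> \<le>
           real (Suc n) ^ 2 * \<rho> ^ n * ((y - x)^2 / \<rho>)"
proof (induction n)
  case 0 then show ?case using \<rho> by simp
next
  case (Suc n)
  define d where "d = y ^ Suc n - x ^ Suc n - real (Suc n) * x ^ n * (y - x)"
  define h where "h = (y - x)^2 / \<rho>"
  have h: "h \<ge> 0" using \<rho> by (simp add: h_def)
  have hh: "(y - x)^2 = \<rho> * h" using \<rho> by (simp add: h_def)
  have eq: "y ^ Suc (Suc n) - x ^ Suc (Suc n) - real (Suc (Suc n)) * x ^ Suc n * (y - x) =
            y * d + real (Suc n) * x ^ n * (y - x)^2"
    by (simp add: d_def algebra_simps power2_eq_square)
  have dB: "\<bar>d\<bar> \<le> real (Suc n) ^ 2 * \<rho> ^ n * h" using Suc.IH by (simp add: d_def h_def)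
  have "\<bar>y * d\<bar> \<le> \<rho> * (real (Suc n) ^ 2 * \<rho> ^ n * h)"
    unfolding abs_mult by (rule mult_mono[OF y dB]) (use \<rho> in auto)
  moreover have "\<bar>real (Suc n) * x ^ n * (y - x)^2\<bar> \<le> real (Suc n) * \<rho> ^ n * (\<rho> * h)"
  proof -
    have "\<bar>x ^ n\<bar> \<le> \<rho> ^ n" using x by (simp add: power_abs power_mono)
    then show ?thesis using h \<rho> by (simp add: abs_mult hh mult_left_mono mult_right_mono)
  qed
  ultimately have "\<bar>y * d + real (Suc n) * x ^ n * (y - x)^2\<bar> \<le>
      \<rho> * (real (Suc n) ^ 2 * \<rho> ^ n * h) + real (Suc n) * \<rho> ^ n * (\<rho> * h)"
    by (meson abs_triangle_ineq add_mono order_trans)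
  also have "\<dots> = (real (Suc n) ^ 2 + real (Suc n)) * \<rho> ^ Suc n * h" by (simp add: algebra_simps)
  also have "\<dots> \<le> real (Suc (Suc n)) ^ 2 * \<rho> ^ Suc n * h"
    using h \<rho> by (intro mult_right_mono) (auto simp: power2_eq_square algebra_simps)
  finally show ?case using eq by (simp add: h_def)
qed

lemma summable_power_series_deriv:
  fixes a :: "nat \<Rightarrow> 'a::{real_normed_vector,complete_space}"
  assumes an: "\<And>n. norm (a n) \<le> K / \<rho>' ^ n" and \<rho>: "0 < \<rho>" "\<rho> < \<rho>'" and z: "\<bar>z\<bar> \<le> \<rho>"
  shows "summable (\<lambda>n. z ^ n *\<^sub>R (real (Suc n) *\<^sub>R a (Suc n)))"
proof (rule summable_norm_cancel_complete)
  define q where "q = \<rho> / \<rho>'"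
  have q: "0 < q" "q < 1" using \<rho> by (auto simp: q_def)
  have "summable (\<lambda>n. (K / \<rho>') * (real (Suc n) * q ^ n))"
    by (intro summable_mult summable_Suc_times_power) (use q in auto)
  then show "summable (\<lambda>n. norm (z ^ n *\<^sub>R (real (Suc n) *\<^sub>R a (Suc n))))"
  proof (rule summable_comparison_test[rotated], intro exI allI impI)
    fix n :: nat
    have "norm (z ^ n *\<^sub>R (real (Suc n) *\<^sub>R a (Suc n))) = \<bar>z\<bar> ^ n * real (Suc n) * norm (a (Suc n))"
      by (simp add: power_abs abs_mult)
    also have "\<dots> \<le> \<rho> ^ n * real (Suc n) * (K / \<rho>' ^ Suc n)"
      by (intro mult_mono power_mono an z) (use \<rho> order_trans[OF norm_ge_zero an] in auto)
    also have "\<dots> = (K / \<rho>') * (real (Suc n) * q ^ n)"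
      using \<rho> by (simp add: q_def power_divide field_simps)
    finally show "norm (norm (z ^ n *\<^sub>R (real (Suc n) *\<^sub>R a (Suc n)))) \<le> (K / \<rho>') * (real (Suc n) * q ^ n)"
      by simp
  qed
qed

lemma power_series_remainder_bound:
  fixes a :: "nat \<Rightarrow> 'a::{real_normed_vector,complete_space}"
  assumes an: "\<And>n. norm (a n) \<le> K / \<rho>' ^ n" and \<rho>: "0 < \<rho>" "\<rho> < \<rho>'"
    and x: "\<bar>x\<bar> \<le> \<rho>" and y: "\<bar>y\<bar> \<le> \<rho>"
    and sx: "summable (\<lambda>n. x ^ n *\<^sub>R a n)" and sy: "summable (\<lambda>n. y ^ n *\<^sub>R a n)"
  shows "norm ((\<Sum>n. y ^ n *\<^sub>R a n) - (\<Sum>n. x ^ n *\<^sub>R a n) -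
               (y - x) *\<^sub>R (\<Sum>n. x ^ n *\<^sub>R (real (Suc n) *\<^sub>R a (Suc n))))
         \<le> (K / \<rho>') / \<rho> * (\<Sum>n. real (Suc n) ^ 2 * (\<rho> / \<rho>') ^ n) * (y - x)^2"
proof -
  define q where "q = \<rho> / \<rho>'"
  have q: "0 < q" "q < 1" using \<rho> by (auto simp: q_def)
  define c where "c = (\<lambda>n. y ^ Suc n - x ^ Suc n - real (Suc n) * x ^ n * (y - x))"
  define g where "g = (\<lambda>y. \<Sum>n. y ^ n *\<^sub>R a n)"
  define G1 where "G1 = (\<Sum>n. x ^ n *\<^sub>R (real (Suc n) *\<^sub>R a (Suc n)))"
  have sq: "summable (\<lambda>n. real (Suc n) ^ 2 * q ^ n)" by (rule summable_Suc_squared_times_power) (use q in auto)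
  have s1: "(\<lambda>n. y ^ n *\<^sub>R a n - x ^ n *\<^sub>R a n) sums (g y - g x)"
    unfolding g_def by (intro sums_diff summable_sums sx sy)
  have s1': "(\<lambda>n. y ^ Suc n *\<^sub>R a (Suc n) - x ^ Suc n *\<^sub>R a (Suc n)) sums (g y - g x)"
    using s1 sums_Suc_iff[of "\<lambda>n. y ^ n *\<^sub>R a n - x ^ n *\<^sub>R a n"] by simp
  have s2: "(\<lambda>n. (y - x) *\<^sub>R (x ^ n *\<^sub>R (real (Suc n) *\<^sub>R a (Suc n)))) sums ((y - x) *\<^sub>R G1)"
    unfolding G1_def by (intro sums_scaleR_right summable_sums summable_power_series_deriv[OF an \<rho> x])
  have s3: "(\<lambda>n. c n *\<^sub>R a (Suc n)) sums (g y - g x - (y - x) *\<^sub>R G1)"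
  proof -
    have "(\<lambda>n. (y ^ Suc n *\<^sub>R a (Suc n) - x ^ Suc n *\<^sub>R a (Suc n)) -
             (y - x) *\<^sub>R (x ^ n *\<^sub>R (real (Suc n) *\<^sub>R a (Suc n)))) sums (g y - g x - (y - x) *\<^sub>R G1)"
      by (rule sums_diff[OF s1' s2])
    moreover have "(y ^ Suc n *\<^sub>R a (Suc n) - x ^ Suc n *\<^sub>R a (Suc n)) -
             (y - x) *\<^sub>R (x ^ n *\<^sub>R (real (Suc n) *\<^sub>R a (Suc n))) = c n *\<^sub>R a (Suc n)" for n
      by (simp add: c_def algebra_simps)
    ultimately show ?thesis by simp
  qed
  have bnd: "norm (c n *\<^sub>R a (Suc n)) \<le> ((K / \<rho>') / \<rho> * (y - x)^2) * (real (Suc n) ^ 2 * q ^ n)" for n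
  proof -
    have "norm (c n *\<^sub>R a (Suc n)) = \<bar>c n\<bar> * norm (a (Suc n))" by simp
    also have "\<dots> \<le> (real (Suc n) ^ 2 * \<rho> ^ n * ((y - x)^2 / \<rho>)) * (K / \<rho>' ^ Suc n)"
      unfolding c_def by (intro mult_mono power_Taylor_remainder_bound an) (use \<rho> x y in auto)
    also have "\<dots> = ((K / \<rho>') / \<rho> * (y - x)^2) * (real (Suc n) ^ 2 * q ^ n)"
      using \<rho> by (simp add: q_def power_divide field_simps)
    finally show ?thesis .
  qed
  have "norm (g y - g x - (y - x) *\<^sub>R G1) \<le> (\<Sum>n. ((K / \<rho>') / \<rho> * (y - x)^2) * (real (Suc n) ^ 2 * q ^ n))"
    using norm_suminf_le_complete[OF sums_summable[OF s3] summable_mult[OF sq] bnd] sums_unique[OF s3]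
    by simp
  also have "\<dots> = (K / \<rho>') / \<rho> * (\<Sum>n. real (Suc n) ^ 2 * q ^ n) * (y - x)^2"
    using suminf_mult[OF sq, of "(K / \<rho>') / \<rho> * (y - x)^2"] by (simp add: mult_ac)
  finally show ?thesis by (simp add: g_def G1_def q_def)
qed

lemma power_series_has_vector_derivative:
  fixes a :: "nat \<Rightarrow> 'a::{real_normed_vector,complete_space}"
  assumes R: "R > 0" and sm: "\<And>x. \<bar>x\<bar> < R \<Longrightarrow> summable (\<lambda>n. x ^ n *\<^sub>R a n)" and x: "\<bar>x\<bar> < R"
  shows "summable (\<lambda>n. x ^ n *\<^sub>R (real (Suc n) *\<^sub>R a (Suc n)))"
    and "((\<lambda>y. \<Sum>n. y ^ n *\<^sub>R a n) has_vector_derivative (\<Sum>n. x ^ n *\<^sub>R (real (Suc n) *\<^sub>R a (Suc n)))) (at x)"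
proof -
  define \<rho> where "\<rho> = (\<bar>x\<bar> + R) / 2"
  define \<rho>' where "\<rho>' = (\<rho> + R) / 2"
  have \<rho>: "\<bar>x\<bar> < \<rho>" "\<rho> < \<rho>'" "\<rho>' < R" "\<rho> > 0" "\<rho>' > 0"
    using x R abs_ge_zero[of x] unfolding \<rho>_def \<rho>'_def by (simp_all add: field_simps)
  have "summable (\<lambda>n. \<rho>' ^ n *\<^sub>R a n)" using sm \<rho> by simp
  then have "Bseq (\<lambda>n. \<rho>' ^ n *\<^sub>R a n)"
    by (intro convergent_imp_Bseq convergentI[OF summable_LIMSEQ_zero])
  then obtain K where K: "\<And>n. norm (\<rho>' ^ n *\<^sub>R a n) \<le> K" by (meson BseqE)
  have an: "norm (a n) \<le> K / \<rho>' ^ n" for n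
    using K[of n] \<rho> by (simp add: field_simps)
  show "summable (\<lambda>n. x ^ n *\<^sub>R (real (Suc n) *\<^sub>R a (Suc n)))"
    using \<rho> by (intro summable_power_series_deriv[OF an]) auto
  define G1 where "G1 = (\<Sum>n. x ^ n *\<^sub>R (real (Suc n) *\<^sub>R a (Suc n)))"
  define g where "g = (\<lambda>y. \<Sum>n. y ^ n *\<^sub>R a n)"
  define C where "C = (K / \<rho>') / \<rho> * (\<Sum>n. real (Suc n) ^ 2 * (\<rho> / \<rho>') ^ n)"
  have "((\<lambda>y. inverse (y - x) *\<^sub>R (g y - g x) - G1) \<longlongrightarrow> 0) (at x)"
  proof (rule Lim_null_comparison)
    show "((\<lambda>y. C * \<bar>y - x\<bar>) \<longlongrightarrow> 0) (at x)"
      by (auto intro!: tendsto_eq_intros)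
    show "\<forall>\<^sub>F y in at x. norm (inverse (y - x) *\<^sub>R (g y - g x) - G1) \<le> C * \<bar>y - x\<bar>"
      unfolding eventually_at
    proof (intro exI[of _ "\<rho> - \<bar>x\<bar>"] conjI ballI impI)
      show "\<rho> - \<bar>x\<bar> > 0" using \<rho> by simp
      fix y assume "y \<in> UNIV" and y: "y \<noteq> x \<and> dist y x < \<rho> - \<bar>x\<bar>"
      then have yr: "\<bar>y\<bar> \<le> \<rho>" by (auto simp: dist_real_def)
      have "inverse (y - x) *\<^sub>R (g y - g x) - G1 = inverse (y - x) *\<^sub>R (g y - g x - (y - x) *\<^sub>R G1)"
        using y by (simp add: scaleR_diff_right)
      then have "norm (inverse (y - x) *\<^sub>R (g y - g x) - G1) = norm (g y - g x - (y - x) *\<^sub>R G1) / \<bar>y - x\<bar>"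
        by (simp add: divide_inverse abs_inverse mult.commute)
      also have "\<dots> \<le> C * (y - x)^2 / \<bar>y - x\<bar>"
        unfolding g_def G1_def C_def using \<rho> yr sm
        by (intro divide_right_mono power_series_remainder_bound[OF an]) auto
      also have "\<dots> = C * \<bar>y - x\<bar>"
        using y by (simp add: power2_eq_square field_simps)
      finally show "norm (inverse (y - x) *\<^sub>R (g y - g x) - G1) \<le> C * \<bar>y - x\<bar>" .
    qed
  qed
  then show "((\<lambda>y. \<Sum>n. y ^ n *\<^sub>R a n) has_vector_derivative (\<Sum>n. x ^ n *\<^sub>R (real (Suc n) *\<^sub>R a (Suc n)))) (at x)"
    unfolding has_vector_derivative_iff_diff_quotient g_def G1_def by (simp add: LIM_zero_iff)
qed

lemma power_series_smooth_on:
  fixes f :: "real \<Rightarrow> 'a::{real_normed_vector,complete_space}"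
  assumes e: "e > 0" and ps: "\<And>t. \<bar>t - t0\<bar> < e \<Longrightarrow> (\<lambda>n. (t - t0) ^ n *\<^sub>R a n) sums f t"
  shows "smooth_on (ball t0 e) f"
proof -
  define D where "D = (\<lambda>(b::nat \<Rightarrow> 'a) n. real (Suc n) *\<^sub>R b (Suc n))"
  define A where "A = (\<lambda>k. (D ^^ k) a)"
  have AS: "A (Suc k) n = real (Suc n) *\<^sub>R A k (Suc n)" for k n by (simp add: A_def D_def)
  have smk: "summable (\<lambda>n. x ^ n *\<^sub>R A k n)" if "\<bar>x\<bar> < e" for k x
    using that
  proof (induction k arbitrary: x)
    case 0 then show ?case using ps[of "x + t0"] by (auto simp: A_def sums_iff)
  next
    case (Suc k)
    show ?case using power_series_has_vector_derivative(1)[OF e Suc.IH Suc.prems] by (simp add: AS)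
  qed
  define S where "S = (\<lambda>k t. \<Sum>n. (t - t0) ^ n *\<^sub>R A k n)"
  have ball: "t \<in> ball t0 e \<longleftrightarrow> \<bar>t - t0\<bar> < e" for t by (simp add: dist_real_def abs_minus_commute)
  show ?thesis
  proof (rule derivative_tower(2)[of "ball t0 e" f S])
    show "f t = S 0 t" if "t \<in> ball t0 e" for t
    proof -
      have "\<bar>t - t0\<bar> < e" using that ball by blast
      then show ?thesis using ps[of t] by (simp add: S_def A_def sums_iff)
    qed
    show "(S k has_vector_derivative S (Suc k) t) (at t)" if t: "t \<in> ball t0 e" for k t
    proof -
      have d1: "((\<lambda>s. s - t0) has_vector_derivative 1) (at t)"
        by (auto intro!: derivative_eq_intros simp: has_real_derivative_iff_has_vector_derivative[symmetric])
      have d2: "((\<lambda>y. \<Sum>n. y ^ n *\<^sub>R A k n) has_vector_derivative S (Suc k) t) (at ((\<lambda>s. s - t0) t))"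
      proof -
        have "\<bar>t - t0\<bar> < e" using t ball by blast
        then show ?thesis using power_series_has_vector_derivative(2)[OF e smk, of "t - t0" k] by (simp add: S_def AS)
      qed
      have "((\<lambda>y. \<Sum>n. y ^ n *\<^sub>R A k n) \<circ> (\<lambda>s. s - t0) has_vector_derivative 1 *\<^sub>R S (Suc k) t) (at t)"
        by (rule vector_diff_chain_at[OF d1 d2])
      then show ?thesis by (simp add: S_def o_def)
    qed
  qed simp
qed

lemma real_analytic_on_imp_smooth_on_ball:
  fixes f :: "real \<Rightarrow> 'a::{real_normed_vector,complete_space}"
  assumes "real_analytic_on f A" "t0 \<in> A"
  obtains e where "e > 0" "smooth_on (ball t0 e) f"
proof -
  obtain e a where "e > 0" "\<And>t. \<bar>t - t0\<bar> < e \<Longrightarrow> (\<lambda>n. (t - t0) ^ n *\<^sub>R a n) sums f t"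
    using assms unfolding real_analytic_on_def by blast
  then show thesis using power_series_smooth_on that by blast
qed


lemma sum_triangle_swap:
  fixes f :: "nat \<Rightarrow> nat \<Rightarrow> 'b::comm_monoid_add"
  shows "(\<Sum>l\<le>q. \<Sum>s\<le>q - l. f l s) = (\<Sum>s\<le>q. \<Sum>l\<le>q - s. f l s)"
proof -
  have "(\<Sum>l\<le>q. \<Sum>s\<le>q - l. f l s) = (\<Sum>l\<le>q. \<Sum>s\<le>q. if l + s \<le> q then f l s else 0)"
  proof (rule sum.cong[OF refl])
    fix l assume "l \<in> {..q}"
    have "(\<Sum>s\<le>q. if l + s \<le> q then f l s else 0) = (\<Sum>s\<in>{s. s \<le> q \<and> l + s \<le> q}. f l s)"
      by (simp add: sum.If_cases Collect_conj_eq atMost_def Int_commute)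
    also have "{s. s \<le> q \<and> l + s \<le> q} = {..q - l}" using \<open>l \<in> {..q}\<close> by auto
    finally show "(\<Sum>s\<le>q - l. f l s) = (\<Sum>s\<le>q. if l + s \<le> q then f l s else 0)" by simp
  qed
  also have "\<dots> = (\<Sum>s\<le>q. \<Sum>l\<le>q. if l + s \<le> q then f l s else 0)" by (rule sum.swap)
  also have "\<dots> = (\<Sum>s\<le>q. \<Sum>l\<le>q - s. f l s)"
  proof (rule sum.cong[OF refl])
    fix s assume "s \<in> {..q}"
    have "(\<Sum>l\<le>q. if l + s \<le> q then f l s else 0) = (\<Sum>l\<in>{l. l \<le> q \<and> l + s \<le> q}. f l s)"
      by (simp add: sum.If_cases Collect_conj_eq atMost_def Int_commute)
    also have "{l. l \<le> q \<and> l + s \<le> q} = {..q - s}" using \<open>s \<in> {..q}\<close> by auto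
    finally show "(\<Sum>l\<le>q. if l + s \<le> q then f l s else 0) = (\<Sum>l\<le>q - s. f l s)" by simp
  qed
  finally show ?thesis .
qed

lemma sum_atMost_reflect:
  fixes f :: "nat \<Rightarrow> nat \<Rightarrow> 'b::comm_monoid_add"
  shows "(\<Sum>d\<le>n. f (n - d) d) = (\<Sum>s\<le>n. f s (n - s))"
  by (rule sum.reindex_bij_witness[of _ "\<lambda>s. n - s" "\<lambda>d. n - d"]) auto

lemma sum_atMost_eq_last: "(\<And>l. l < n \<Longrightarrow> f l = 0) \<Longrightarrow> (\<Sum>l\<le>(n::nat). f l) = f n"
proof -
  assume h: "\<And>l. l < n \<Longrightarrow> f l = 0"
  have "{..n} = insert n {..<n}" by auto
  then show ?thesis using h by simp
qed

lemma sum_atMost_eq_head: "(\<Sum>l\<le>(q::nat). f l) = f 0 + (\<Sum>l\<in>{1..q}. f l)"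
proof -
  have "{..q} = insert 0 {1..q}" by auto
  then show ?thesis by simp
qed

section \<open>Chains of root vectors from Taylor coefficients\<close>

text \<open>Here \<open>Ld l\<close>, \<open>e j n\<close> and \<open>mm j n\<close> stand for the Taylor coefficients at lam0 of
  L, u_j and mu_j, and \<open>J1\<close> for the indices with mu_j(lam0) = 0; for \<open>w\<close> in the kernel,
  \<open>E d w\<close> is the paper's (1/d!) U_0^(d) V_0 w.\<close>
locale taylor_chain =
  fixes D :: "'a::complex_inner set" and Ld :: "nat \<Rightarrow> 'a \<Rightarrow> 'a"
    and e :: "nat \<Rightarrow> nat \<Rightarrow> 'a" and mm :: "nat \<Rightarrow> nat \<Rightarrow> real" and J1 :: "nat set"
  assumes D_subspace: "csubspace D"
    and e_in_D: "\<And>j n. e j n \<in> D"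
    and Ld_add: "\<And>l x y. x \<in> D \<Longrightarrow> y \<in> D \<Longrightarrow> Ld l (x + y) = Ld l x + Ld l y"
    and Ld_scale: "\<And>l c x. x \<in> D \<Longrightarrow> Ld l (c *\<^sub>C x) = c *\<^sub>C Ld l x"
    and taylor_identity: "\<And>j q. (\<Sum>l\<le>q. Ld l (e j (q - l))) = (\<Sum>l\<le>q. complex_of_real (mm j l) *\<^sub>C e j (q - l))"
    and e_0_orthonormal: "\<And>i j. cinner (e i 0) (e j 0) = (if i = j then 1 else 0)"
    and J1_iff: "\<And>j. j \<in> J1 \<longleftrightarrow> mm j 0 = 0" and finite_J1: "finite J1"
    and ker0_expansion: "\<And>x. x \<in> D \<Longrightarrow> Ld 0 x = 0 \<Longrightarrow> x = (\<Sum>j\<in>J1. cinner x (e j 0) *\<^sub>C e j 0)"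
    and Ld_0_orthogonal: "\<And>x i. x \<in> D \<Longrightarrow> i \<in> J1 \<Longrightarrow> cinner (Ld 0 x) (e i 0) = 0"
begin

definition Y :: "nat \<Rightarrow> 'a set" where
  "Y s = cspan {e j 0 | j. \<forall>n<s. mm j n = 0}"

definition E :: "nat \<Rightarrow> 'a \<Rightarrow> 'a" where
  "E d w = (\<Sum>j\<in>J1. cinner w (e j 0) *\<^sub>C e j d)"

definition ker0 :: "'a set" where "ker0 = {x \<in> D. Ld 0 x = 0}"

lemma D_zero: "0 \<in> D" and D_add: "x \<in> D \<Longrightarrow> y \<in> D \<Longrightarrow> x + y \<in> D" and D_scale: "x \<in> D \<Longrightarrow> c *\<^sub>C x \<in> D"
  using D_subspace unfolding csubspace_def by auto

lemma D_sum: "(\<And>i. i \<in> F \<Longrightarrow> x i \<in> D) \<Longrightarrow> (\<Sum>i\<in>F. x i) \<in> D"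
  by (induction F rule: infinite_finite_induct) (auto simp: D_zero D_add)

lemma D_minus: "x \<in> D \<Longrightarrow> - x \<in> D"
  using D_scale[of x "-1"] by (simp add: complex_vector.scale_minus_left)

lemma D_diff: "x \<in> D \<Longrightarrow> y \<in> D \<Longrightarrow> x - y \<in> D"
  using D_add[of x "- y"] D_minus[of y] by simp

lemma Ld_zero: "Ld l 0 = 0"
  using Ld_scale[of 0 l 0] D_zero by simp

lemma Ld_sum: "(\<And>i. i \<in> F \<Longrightarrow> x i \<in> D) \<Longrightarrow> Ld l (\<Sum>i\<in>F. x i) = (\<Sum>i\<in>F. Ld l (x i))"
proof (induction F rule: infinite_finite_induct)
  case (insert a F) then show ?case by (simp add: Ld_add D_sum)
qed (auto simp: Ld_zero)

lemma Ld_minus: "x \<in> D \<Longrightarrow> Ld l (- x) = - Ld l x"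
  using Ld_scale[of x l "-1"] by (simp add: complex_vector.scale_minus_left)

lemma Ld_diff: "x \<in> D \<Longrightarrow> y \<in> D \<Longrightarrow> Ld l (x - y) = Ld l x - Ld l y"
  using Ld_add[of x "- y" l] D_minus[of y] Ld_minus[of y l] by simp

lemma E_in_D: "E d w \<in> D"
  unfolding E_def by (intro D_sum D_scale e_in_D)

lemma Ld_E: "Ld l (E d w) = (\<Sum>j\<in>J1. cinner w (e j 0) *\<^sub>C Ld l (e j d))"
  unfolding E_def by (simp add: Ld_sum D_scale e_in_D Ld_scale)


lemma E_zero [simp]: "E d 0 = 0"
  by (simp add: E_def)

lemma Ld_0_e_0: "j \<in> J1 \<Longrightarrow> Ld 0 (e j 0) = 0"
  using taylor_identity[of j 0] J1_iff[of j] by simp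

lemma e_0_inj: "e i 0 = e j 0 \<Longrightarrow> i = j"
  using e_0_orthonormal[of i j] e_0_orthonormal[of j j] by (metis one_neq_zero)

lemma cinner_Y_eq_0: "w \<in> Y s \<Longrightarrow> \<not> (\<forall>n<s. mm j n = 0) \<Longrightarrow> cinner w (e j 0) = 0"
proof -
  assume w: "w \<in> Y s" and j: "\<not> (\<forall>n<s. mm j n = 0)"
  then obtain F c where F: "finite F" "F \<subseteq> {e j 0 | j. \<forall>n<s. mm j n = 0}" and wF: "w = (\<Sum>a\<in>F. c a *\<^sub>C a)"
    unfolding Y_def cspan_def by blast
  have "cinner a (e j 0) = 0" if aF: "a \<in> F" for a
  proof -
    obtain j' where "a = e j' 0" "\<forall>n<s. mm j' n = 0" using F aF by blast
    moreover then have "j' \<noteq> j" using j by auto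
    ultimately show ?thesis using e_0_orthonormal[of j' j] by simp
  qed
  then show ?thesis unfolding wF by (simp add: cinner_sum_left cinner_scaleC_left)
qed

lemma ker0_closed: "x \<in> ker0 \<Longrightarrow> y \<in> ker0 \<Longrightarrow> x + y \<in> ker0" "x \<in> ker0 \<Longrightarrow> c *\<^sub>C x \<in> ker0" "0 \<in> ker0"
  unfolding ker0_def by (auto simp: D_add D_scale Ld_add Ld_scale D_zero Ld_zero)

lemma ker0_sum: "(\<And>i. i \<in> F \<Longrightarrow> x i \<in> ker0) \<Longrightarrow> (\<Sum>i\<in>F. x i) \<in> ker0"
  by (induction F rule: infinite_finite_induct) (auto intro: ker0_closed)

lemma Y_subset_ker0: "s \<ge> 1 \<Longrightarrow> Y s \<subseteq> ker0"
proof
  fix w assume s: "s \<ge> 1" and "w \<in> Y s"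
  then obtain F c where F: "finite F" "F \<subseteq> {e j 0 | j. \<forall>n<s. mm j n = 0}" and wF: "w = (\<Sum>a\<in>F. c a *\<^sub>C a)"
    unfolding Y_def cspan_def by blast
  have "a \<in> ker0" if aF: "a \<in> F" for a
  proof -
    obtain j where "a = e j 0" "\<forall>n<s. mm j n = 0" using F aF by blast
    then have "a = e j 0" "j \<in> J1" using s J1_iff by auto
    then show ?thesis by (simp add: ker0_def e_in_D Ld_0_e_0)
  qed
  then show "w \<in> ker0" unfolding wF by (intro ker0_sum ker0_closed)
qed

lemma ker0_eq_sum: "x \<in> ker0 \<Longrightarrow> x = (\<Sum>j\<in>J1. cinner x (e j 0) *\<^sub>C e j 0)"
  using ker0_expansion by (auto simp: ker0_def)

lemma E_0_ker0: "x \<in> ker0 \<Longrightarrow> E 0 x = x"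
  using ker0_eq_sum by (simp add: E_def)

lemma ker0_in_Y: 
  assumes x: "x \<in> ker0" and c: "\<And>j. j \<in> J1 \<Longrightarrow> cinner x (e j 0) \<noteq> 0 \<Longrightarrow> \<forall>n<s. mm j n = 0"
  shows "x \<in> Y s"
proof -
  define J' where "J' = {j \<in> J1. cinner x (e j 0) \<noteq> 0}"
  have fin: "finite J'" using finite_J1 by (simp add: J'_def)
  have "x = (\<Sum>j\<in>J1. cinner x (e j 0) *\<^sub>C e j 0)" by (rule ker0_eq_sum[OF x])
  also have "\<dots> = (\<Sum>j\<in>J'. cinner x (e j 0) *\<^sub>C e j 0)"
    by (rule sum.mono_neutral_right) (auto simp: J'_def finite_J1)
  also have "\<dots> = (\<Sum>a\<in>(\<lambda>j. e j 0) ` J'. (\<lambda>a. cinner x a) a *\<^sub>C a)"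
    by (subst sum.reindex) (auto simp: inj_on_def e_0_inj)
  finally have xx: "x = (\<Sum>a\<in>(\<lambda>j. e j 0) ` J'. cinner x a *\<^sub>C a)" .
  have "(\<lambda>j. e j 0) ` J' \<subseteq> {e j 0 | j. \<forall>n<s. mm j n = 0}"
    using c by (auto simp: J'_def)
  then show ?thesis unfolding Y_def cspan_def using fin xx by blast
qed

lemma chain_of_convolution:
  "(\<Sum>l\<le>q. Ld l (\<Sum>d\<le>q-l. E d (w (q-l-d)))) =
   (\<Sum>s\<le>q. \<Sum>j\<in>J1. cinner (w s) (e j 0) *\<^sub>C (\<Sum>l\<le>q-s. complex_of_real (mm j l) *\<^sub>C e j (q-s-l)))"
proof -
  define c where "c = (\<lambda>s j. cinner (w s) (e j 0))"
  have "(\<Sum>l\<le>q. Ld l (\<Sum>d\<le>q-l. E d (w (q-l-d)))) =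
        (\<Sum>l\<le>q. \<Sum>d\<le>q-l. (\<lambda>s d. \<Sum>j\<in>J1. c s j *\<^sub>C Ld l (e j d)) (q - l - d) d)"
    by (simp add: Ld_sum E_in_D Ld_E c_def)
  also have "\<dots> = (\<Sum>l\<le>q. \<Sum>s\<le>q-l. \<Sum>j\<in>J1. c s j *\<^sub>C Ld l (e j (q - l - s)))"
    by (rule sum.cong[OF refl], subst sum_atMost_reflect) simp
  also have "\<dots> = (\<Sum>s\<le>q. \<Sum>l\<le>q-s. \<Sum>j\<in>J1. c s j *\<^sub>C Ld l (e j (q - l - s)))"
    by (rule sum_triangle_swap)
  also have "\<dots> = (\<Sum>s\<le>q. \<Sum>j\<in>J1. c s j *\<^sub>C (\<Sum>l\<le>q-s. Ld l (e j (q - s - l))))"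
    by (rule sum.cong[OF refl], subst sum.swap) (simp add: complex_vector.scale_sum_right diff_commute add.commute)
  also have "\<dots> = (\<Sum>s\<le>q. \<Sum>j\<in>J1. c s j *\<^sub>C (\<Sum>l\<le>q-s. complex_of_real (mm j l) *\<^sub>C e j (q-s-l)))"
    by (simp only: taylor_identity)
  finally show ?thesis by (simp add: c_def)
qed

definition is_chain :: "nat \<Rightarrow> (nat \<Rightarrow> 'a) \<Rightarrow> bool" where
  "is_chain m us \<longleftrightarrow> (\<forall>i<m. us i \<in> D) \<and> (\<forall>q<m. (\<Sum>l\<le>q. Ld l (us (q - l))) = 0)"

definition chain_of :: "(nat \<Rightarrow> 'a) \<Rightarrow> nat \<Rightarrow> 'a" where
  "chain_of w r = (\<Sum>d\<le>r. E d (w (r - d)))"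

lemma chain_of_in_D: "chain_of w r \<in> D"
  unfolding chain_of_def by (intro D_sum E_in_D)

lemma Y_mono: "a \<le> b \<Longrightarrow> Y b \<subseteq> Y a"
  unfolding Y_def cspan_def by (force)

lemma Y_zero: "0 \<in> Y s"
  unfolding Y_def cspan_def by (auto intro!: exI[of _ "{}"])

lemma chain_of_convolution_eq_0:
  assumes "\<And>s. s \<le> q \<Longrightarrow> w s \<in> Y (Suc (q - s))"
  shows "(\<Sum>l\<le>q. Ld l (chain_of w (q - l))) = 0"
proof -
  have "(\<Sum>l\<le>q. Ld l (chain_of w (q - l))) =
   (\<Sum>s\<le>q. \<Sum>j\<in>J1. cinner (w s) (e j 0) *\<^sub>C (\<Sum>l\<le>q-s. complex_of_real (mm j l) *\<^sub>C e j (q-s-l)))"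
    unfolding chain_of_def by (rule chain_of_convolution)
  also have "\<dots> = 0"
  proof (intro sum.neutral ballI)
    fix s j assume s: "s \<in> {..q}" and j: "j \<in> J1"
    show "cinner (w s) (e j 0) *\<^sub>C (\<Sum>l\<le>q-s. complex_of_real (mm j l) *\<^sub>C e j (q-s-l)) = 0"
    proof (cases "cinner (w s) (e j 0) = 0")
      case False
      then have "\<forall>n<Suc (q - s). mm j n = 0" using cinner_Y_eq_0[OF assms[of s]] s by auto
      then show ?thesis by simp
    qed simp
  qed
  finally show ?thesis .
qed

lemma is_chain_chain_of:
  assumes "\<And>s. s < m \<Longrightarrow> w s \<in> Y (m - s)"
  shows "is_chain m (chain_of w)"
  unfolding is_chain_def
proof (intro conjI allI impI)
  show "chain_of w i \<in> D" for i by (rule chain_of_in_D)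
  fix q assume q: "q < m"
  show "(\<Sum>l\<le>q. Ld l (chain_of w (q - l))) = 0"
  proof (rule chain_of_convolution_eq_0)
    fix s assume "s \<le> q"
    moreover have "Suc (q - s) \<le> m - s" using \<open>s \<le> q\<close> q by arith
    ultimately show "w s \<in> Y (Suc (q - s))" using assms[of s] q Y_mono[of "Suc (q - s)" "m - s"] by auto
  qed
qed

lemma cinner_taylor_sum_Y:
  assumes w: "w \<in> Y t"
  shows "cinner w (e j 0) * (\<Sum>l\<le>t. complex_of_real (mm j l) * cinner (e j (t - l)) (e i 0)) =
         (if j = i then cinner w (e i 0) * complex_of_real (mm i t) else 0)"
proof (cases "cinner w (e j 0) = 0")
  case True then show ?thesis by auto
next
  case False
  then have z: "\<forall>n<t. mm j n = 0" using cinner_Y_eq_0[OF w] by blast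
  have "(\<Sum>l\<le>t. complex_of_real (mm j l) * cinner (e j (t - l)) (e i 0)) =
        complex_of_real (mm j t) * cinner (e j 0) (e i 0)"
    by (subst sum_atMost_eq_last) (use z in auto)
  then show ?thesis by (simp add: e_0_orthonormal)
qed

lemma vanishing_sum_single_term:
  fixes a :: "nat \<Rightarrow> complex"
  assumes sum0: "(\<Sum>s<M. a s * complex_of_real (mm i (M - s))) = 0"
    and van: "\<And>s. s < M \<Longrightarrow> a s \<noteq> 0 \<Longrightarrow> \<forall>n<M - s. mm i n = 0"
  shows "s < M \<Longrightarrow> a s * complex_of_real (mm i (M - s)) = 0"
proof (rule ccontr)
  assume s0: "s < M" and ne: "a s * complex_of_real (mm i (M - s)) \<noteq> 0"
  have other: "a s' * complex_of_real (mm i (M - s')) = 0" if s': "s' < M" "s' \<noteq> s" for s'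
  proof (cases "a s' = 0")
    case False
    then have z': "\<forall>n<M - s'. mm i n = 0" using van s' by blast
    have as: "a s \<noteq> 0" using ne by auto
    then have z: "\<forall>n<M - s. mm i n = 0" using van s0 by blast
    show ?thesis
    proof (cases "s' < s")
      case True
      then have "M - s < M - s'" using s0 by arith
      then have "mm i (M - s) = 0" using z' by blast
      then show ?thesis using ne by simp
    next
      case False
      then have "M - s' < M - s" using s' s0 by arith
      then show ?thesis using z by simp
    qed
  qed simp
  have rest: "(\<Sum>s'\<in>{..<M} - {s}. a s' * complex_of_real (mm i (M - s'))) = 0"
  proof (rule sum.neutral, rule ballI)
    fix s' assume "s' \<in> {..<M} - {s}"
    then show "a s' * complex_of_real (mm i (M - s')) = 0" using other[of s'] by simp
  qed
  have "(\<Sum>s'<M. a s' * complex_of_real (mm i (M - s'))) = a s * complex_of_real (mm i (M - s))"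
    using sum.remove[of "{..<M}" s "\<lambda>s'. a s' * complex_of_real (mm i (M - s'))"] s0 rest by simp
  then show False using sum0 ne by simp
qed

lemma cinner_chain_of_convolution:
  assumes wY: "\<And>s. s \<le> q \<Longrightarrow> w s \<in> Y (q - s)" and i: "i \<in> J1"
  shows "cinner (\<Sum>l\<le>q. Ld l (chain_of w (q - l))) (e i 0) =
         (\<Sum>s\<le>q. cinner (w s) (e i 0) * complex_of_real (mm i (q - s)))"
proof -
  have "cinner (\<Sum>l\<le>q. Ld l (chain_of w (q - l))) (e i 0) =
      (\<Sum>s\<le>q. \<Sum>j\<in>J1. cinner (w s) (e j 0) *
          (\<Sum>l\<le>q-s. complex_of_real (mm j l) * cinner (e j (q-s-l)) (e i 0)))"
    unfolding chain_of_def chain_of_convolution by (simp add: cinner_sum_left cinner_scaleC_left)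
  also have "\<dots> = (\<Sum>s\<le>q. \<Sum>j\<in>J1. (if j = i then cinner (w s) (e i 0) * complex_of_real (mm i (q - s)) else 0))"
    by (intro sum.cong refl cinner_taylor_sum_Y wY) auto
  also have "\<dots> = (\<Sum>s\<le>q. cinner (w s) (e i 0) * complex_of_real (mm i (q - s)))"
    using i finite_J1 by (simp add: sum.delta)
  finally show ?thesis .
qed

lemma convolution_diff_last:
  assumes "\<And>r. r < q \<Longrightarrow> x r = y r" and "x q \<in> D" "y q \<in> D"
  shows "(\<Sum>l\<le>q. Ld l (x (q - l))) - (\<Sum>l\<le>q. Ld l (y (q - l))) = Ld 0 (x q - y q)"
proof -
  have "(\<Sum>l\<in>{1..q}. Ld l (x (q - l))) = (\<Sum>l\<in>{1..q}. Ld l (y (q - l)))"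
    using assms(1) by (intro sum.cong) auto
  then show ?thesis
    using assms(2,3) by (simp add: sum_atMost_eq_head[of _ q] Ld_diff)
qed

lemma chain_of_upd_less: "r < m \<Longrightarrow> chain_of (w(m := x)) r = chain_of w r"
  unfolding chain_of_def by (intro sum.cong) auto

lemma chain_of_upd_eq: "chain_of (w(m := x)) m = E 0 x + chain_of (w(m := 0)) m"
proof -
  have "(\<Sum>d\<in>{1..m}. E d ((w(m := x)) (m - d))) = (\<Sum>d\<in>{1..m}. E d ((w(m := 0)) (m - d)))"
    by (intro sum.cong) auto
  then show ?thesis
    unfolding chain_of_def by (simp add: sum_atMost_eq_head[of _ m])
qed

text \<open>Pairing the chain equation of order m with \<open>e i 0\<close>, \<open>i \<in> J1\<close>, kills the unknown
  last vector, because \<open>Ld 0\<close> maps into the orthogonal complement of the kernel.\<close>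
lemma is_chain_Suc_coefficients_in_Y:
  assumes chain: "is_chain (Suc m) us"
    and wY: "\<And>s. s < m \<Longrightarrow> w s \<in> Y (m - s)" and wr: "\<And>r. r < m \<Longrightarrow> us r = chain_of w r"
    and s: "s < m"
  shows "w s \<in> Y (Suc m - s)"
proof (rule ker0_in_Y)
  define w0 where "w0 = w(m := 0)"
  have w0Y: "w0 s \<in> Y (m - s)" if "s \<le> m" for s
    using wY[of s] that by (cases "s = m") (auto simp: w0_def Y_zero)
  have usD: "us m \<in> D" and us_eq: "(\<Sum>l\<le>m. Ld l (us (m - l))) = 0"
    using chain by (auto simp: is_chain_def)
  have vanish: "(\<Sum>s<m. cinner (w s) (e i 0) * complex_of_real (mm i (m - s))) = 0" if i: "i \<in> J1" for i
  proof -
    have "(\<Sum>l\<le>m. Ld l (chain_of w0 (m - l))) = Ld 0 (chain_of w0 m - us m)"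
      using convolution_diff_last[of m "chain_of w0" us] us_eq usD chain_of_in_D
      by (simp add: w0_def chain_of_upd_less wr)
    then have "(\<Sum>s\<le>m. cinner (w0 s) (e i 0) * complex_of_real (mm i (m - s))) = 0"
      using cinner_chain_of_convolution[OF w0Y i] Ld_0_orthogonal[OF D_diff[OF chain_of_in_D usD] i]
      by simp
    moreover have "{..m} = insert m {..<m}" by auto
    ultimately show ?thesis by (simp add: w0_def)
  qed
  have "1 \<le> m - s" using s by simp
  then show "w s \<in> ker0" using Y_subset_ker0[of "m - s"] wY[OF s] by auto
  fix j assume j: "j \<in> J1" and c: "cinner (w s) (e j 0) \<noteq> 0"
  have "\<forall>n<m - s. mm j n = 0" using cinner_Y_eq_0[OF wY[OF s]] c by blast
  moreover have "mm j (m - s) = 0"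
    using vanishing_sum_single_term[OF vanish[OF j] _ s] cinner_Y_eq_0[OF wY] c by fastforce
  ultimately show "\<forall>n<Suc m - s. mm j n = 0"
    by (metis Suc_diff_le less_Suc_eq less_imp_le s)
qed

lemma is_chain_imp_chain_of:
  "is_chain m us \<Longrightarrow> \<exists>w. (\<forall>s<m. w s \<in> Y (m - s)) \<and> (\<forall>r<m. us r = chain_of w r)"
proof (induction m)
  case 0 show ?case by auto
next
  case (Suc m)
  have "is_chain m us" using Suc.prems by (auto simp: is_chain_def)
  then obtain w where wY: "\<And>s. s < m \<Longrightarrow> w s \<in> Y (m - s)" and wr: "\<And>r. r < m \<Longrightarrow> us r = chain_of w r"
    using Suc.IH by blast
  have wY': "w s \<in> Y (Suc m - s)" if "s < m" for s
    by (rule is_chain_Suc_coefficients_in_Y[OF Suc.prems wY wr that])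
  have usD: "us m \<in> D" and us_eq: "(\<Sum>l\<le>m. Ld l (us (m - l))) = 0"
    using Suc.prems by (auto simp: is_chain_def)
  define w0 where "w0 = w(m := 0)"
  define v where "v = us m - chain_of w0 m"
  have "(\<Sum>l\<le>m. Ld l (chain_of w0 (m - l))) = 0"
    using wY' Suc_diff_le by (intro chain_of_convolution_eq_0) (auto simp: w0_def Y_zero)
  then have "Ld 0 v = 0"
    using convolution_diff_last[of m us "chain_of w0"] us_eq usD chain_of_in_D
    by (simp add: v_def w0_def chain_of_upd_less wr)
  then have vK: "v \<in> ker0" using usD chain_of_in_D by (simp add: ker0_def v_def D_diff)
  have "v \<in> Y 1" by (rule ker0_in_Y[OF vK]) (auto simp: J1_iff)
  then have "\<forall>s<Suc m. (w(m := v)) s \<in> Y (Suc m - s)"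
    using wY' by (auto simp: less_Suc_eq)
  moreover have "\<forall>r<Suc m. us r = chain_of (w(m := v)) r"
    using wr chain_of_upd_eq[of w m v] E_0_ker0[OF vK]
    by (auto simp: less_Suc_eq chain_of_upd_less v_def w0_def)
  ultimately show ?case by blast
qed

end

section \<open>Analytic families of eigenvectors\<close>

locale analytic_eigenbasis =
  fixes S :: "complex set" and D :: "'a::{complex_inner,complete_space} set"
    and L :: "complex \<Rightarrow> 'a \<Rightarrow> 'a" and \<mu> :: "nat \<Rightarrow> real \<Rightarrow> real" and u :: "nat \<Rightarrow> real \<Rightarrow> 'a"
    and lam0 :: real
  assumes S_open: "open S" and D_subspace: "csubspace D" and D_dense: "closure D = UNIV"
    and L_holomorphic: "\<And>x. x \<in> D \<Longrightarrow> vec_holomorphic_on (\<lambda>z. L z x) S"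
    and L_symmetric: "\<And>t x v. complex_of_real t \<in> S \<Longrightarrow> x \<in> D \<Longrightarrow> v \<in> D \<Longrightarrow>
       cinner (L (complex_of_real t) x) v = cinner x (L (complex_of_real t) v)"
    and L_adjoint_domain: "\<And>v w. (\<And>x. x \<in> D \<Longrightarrow> cinner (L (complex_of_real lam0) x) v = cinner x w) \<Longrightarrow> v \<in> D"
    and \<mu>_analytic: "\<And>j. real_analytic_on (\<mu> j) {t. complex_of_real t \<in> S}"
    and u_analytic: "\<And>j. real_analytic_on (u j) {t. complex_of_real t \<in> S}"
    and eigen: "\<And>t j. complex_of_real t \<in> S \<Longrightarrow>
       u j t \<in> D \<and> L (complex_of_real t) (u j t) = complex_of_real (\<mu> j t) *\<^sub>C u j t"
    and orthonormal: "\<And>i j. cinner (u i lam0) (u j lam0) = (if i = j then 1 else 0)"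
    and complete: "closure (cspan (range (\<lambda>j. u j lam0))) = UNIV"
    and lam0: "complex_of_real lam0 \<in> S"
    and kernel_finite_dim: "\<exists>F. finite F \<and> cspan F = {x \<in> D. L (complex_of_real lam0) x = 0}"
begin

abbreviation S_real :: "real set" where "S_real \<equiv> {t. complex_of_real t \<in> S}"

definition LD :: "nat \<Rightarrow> 'a \<Rightarrow> 'a" where
  "LD l x = (cderiv ^^ l) (\<lambda>z. L z x) (complex_of_real lam0)"

definition Ld :: "nat \<Rightarrow> 'a \<Rightarrow> 'a" where
  "Ld l x = (1 / fact l) *\<^sub>C LD l x"

definition U :: "nat \<Rightarrow> nat \<Rightarrow> 'a" where
  "U n j = nderiv n (u j) lam0"

definition M :: "nat \<Rightarrow> nat \<Rightarrow> real" where
  "M n j = nderiv n (\<mu> j) lam0"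

definition e :: "nat \<Rightarrow> nat \<Rightarrow> 'a" where
  "e j n = (1 / fact n) *\<^sub>C U n j"

definition mm :: "nat \<Rightarrow> nat \<Rightarrow> real" where
  "mm j n = M n j / fact n"

definition J1 :: "nat set" where
  "J1 = {j. \<mu> j lam0 = 0}"

lemma open_S_real: "open S_real"
  by (rule open_real_preimage[OF S_open])

lemma lam0_S_real: "lam0 \<in> S_real"
  using lam0 by simp

lemma LD_0: "LD 0 x = L (complex_of_real lam0) x"
  by (simp add: LD_def)

lemma Ld_0: "Ld 0 x = L (complex_of_real lam0) x"
  by (simp add: Ld_def LD_0)

lemma e_0: "e j 0 = u j lam0"
  by (simp add: e_def U_def)

lemma smooth_on_L: "x \<in> D \<Longrightarrow> smooth_on S_real (\<lambda>t. L (complex_of_real t) x)"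
  using nderiv_vec_holomorphic_real(2)[OF S_open L_holomorphic] by simp

lemma nderiv_L: "x \<in> D \<Longrightarrow> nderiv l (\<lambda>t. L (complex_of_real t) x) lam0 = LD l x"
  using nderiv_vec_holomorphic_real(1)[OF S_open L_holomorphic lam0] by (simp add: LD_def)

lemma nderiv_cinner_L:
  assumes "x \<in> D"
  shows "nderiv l (\<lambda>t. cinner (L (complex_of_real t) x) v) lam0 = cinner (LD l x) v"
    and "nderiv l (\<lambda>t. cinner v (L (complex_of_real t) x)) lam0 = cinner v (LD l x)"
  using bounded_linear_nderiv(1)[OF open_S_real smooth_on_L[OF assms] bounded_linear_cinner_left lam0_S_real]
    bounded_linear_nderiv(1)[OF open_S_real smooth_on_L[OF assms] bounded_linear_cinner_right lam0_S_real]
    nderiv_L[OF assms]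
  by simp_all

lemma LD_symmetric: "x \<in> D \<Longrightarrow> v \<in> D \<Longrightarrow> cinner (LD l x) v = cinner x (LD l v)"
  using nderiv_cong_open[OF open_S_real _ lam0_S_real, of "\<lambda>t. cinner (L (complex_of_real t) x) v"
      "\<lambda>t. cinner x (L (complex_of_real t) v)"] L_symmetric nderiv_cinner_L
  by simp

lemma LD_add: "x \<in> D \<Longrightarrow> y \<in> D \<Longrightarrow> LD l (x + y) = LD l x + LD l y"
proof (rule dense_cinner_eq[OF D_dense])
  fix v assume "x \<in> D" "y \<in> D" "v \<in> D"
  moreover have "x + y \<in> D" using D_subspace \<open>x \<in> D\<close> \<open>y \<in> D\<close> by (simp add: csubspace_def)
  ultimately show "cinner (LD l (x + y)) v = cinner (LD l x + LD l y) v"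
    by (simp add: LD_symmetric cinner_add_left)
qed

lemma LD_scale: "x \<in> D \<Longrightarrow> LD l (c *\<^sub>C x) = c *\<^sub>C LD l x"
proof (rule dense_cinner_eq[OF D_dense])
  fix v assume "x \<in> D" "v \<in> D"
  moreover have "c *\<^sub>C x \<in> D" using D_subspace \<open>x \<in> D\<close> by (simp add: csubspace_def)
  ultimately show "cinner (LD l (c *\<^sub>C x)) v = cinner (c *\<^sub>C LD l x) v"
    by (simp add: LD_symmetric cinner_scaleC_left)
qed

lemma eigen_pairing:
  assumes "complex_of_real t \<in> S" "v \<in> D"
  shows "cinner (u j t) (L (complex_of_real t) v) = \<mu> j t *\<^sub>R cinner (u j t) v"
  using L_symmetric[OF assms(1) _ assms(2), of "u j t"] eigen[OF assms(1), of j]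
  by (simp add: cinner_scaleC_left scaleR_conv_of_real)

text \<open>The \<open>q\<close>-th derivative of \<open>eigen_pairing\<close> at \<open>lam0\<close>.\<close>
lemma Leibniz_eigen_identity:
  assumes v: "v \<in> D"
  shows "(\<Sum>l\<le>q. real (q choose l) *\<^sub>R cinner (U (q - l) j) (LD l v)) =
         (\<Sum>l\<le>q. real (q choose l) *\<^sub>R (M l j *\<^sub>R cinner (U (q - l) j) v))"
proof -
  obtain eu where eu: "eu > 0" "smooth_on (ball lam0 eu) (u j)"
    using real_analytic_on_imp_smooth_on_ball[OF u_analytic lam0_S_real] by blast
  obtain em where em: "em > 0" "smooth_on (ball lam0 em) (\<mu> j)"
    using real_analytic_on_imp_smooth_on_ball[OF \<mu>_analytic lam0_S_real] by blast
  define T0 where "T0 = S_real \<inter> ball lam0 eu \<inter> ball lam0 em"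
  have T0: "open T0" "lam0 \<in> T0" "T0 \<subseteq> S_real"
    using open_S_real lam0_S_real eu em by (auto simp: T0_def)
  have smu: "smooth_on T0 (u j)" and smm: "smooth_on T0 (\<mu> j)"
    and smLv: "smooth_on T0 (\<lambda>t. L (complex_of_real t) v)"
    using eu em smooth_on_L[OF v] by (auto simp: T0_def intro: smooth_on_subset)
  have "nderiv q (\<lambda>t. cinner (u j t) (L (complex_of_real t) v)) lam0 =
        nderiv q (\<lambda>t. \<mu> j t *\<^sub>R cinner (u j t) v) lam0"
    using T0 eigen_pairing[OF _ v] by (intro nderiv_cong_open[OF T0(1) _ T0(2)]) auto
  moreover have "nderiv q (\<lambda>t. cinner (u j t) (L (complex_of_real t) v)) lam0 =
        (\<Sum>l\<le>q. real (q choose l) *\<^sub>R cinner (U (q - l) j) (LD l v))"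
    using Leibniz_nderiv(1)[OF bounded_bilinear.flip[OF bounded_bilinear_cinner] T0(1) smLv smu T0(2), of q]
    by (simp add: nderiv_L[OF v] U_def)
  moreover have "nderiv q (\<lambda>t. \<mu> j t *\<^sub>R cinner (u j t) v) lam0 =
        (\<Sum>l\<le>q. real (q choose l) *\<^sub>R (M l j *\<^sub>R cinner (U (q - l) j) v))"
    using Leibniz_nderiv(1)[OF bounded_bilinear_scaleR T0(1) smm bounded_linear_nderiv(2)[OF T0(1) smu bounded_linear_cinner_left] T0(2)]
      bounded_linear_nderiv(1)[OF T0(1) smu bounded_linear_cinner_left T0(2)]
    by (simp add: M_def U_def)
  ultimately show ?thesis by simp
qed

lemma cinner_L_U:
  assumes UD: "\<And>r. r < q \<Longrightarrow> U r j \<in> D" and x: "x \<in> D"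
  shows "cinner (L (complex_of_real lam0) x) (U q j) =
    cinner x ((\<Sum>l\<le>q. real (q choose l) *\<^sub>R (M l j *\<^sub>R U (q - l) j)) -
              (\<Sum>l\<in>{1..q}. real (q choose l) *\<^sub>R LD l (U (q - l) j)))"
proof -
  have cinner_sumR: "cinner (\<Sum>l\<in>A. r l *\<^sub>R a l) x = (\<Sum>l\<in>A. r l *\<^sub>R cinner (a l) x)"
    for A :: "nat set" and r :: "nat \<Rightarrow> real" and a :: "nat \<Rightarrow> 'a"
    by (simp add: cinner_sum_left cinner_scaleR_left scaleR_conv_of_real)
  have "(\<Sum>l\<in>{1..q}. real (q choose l) *\<^sub>R cinner (U (q - l) j) (LD l x)) =
        (\<Sum>l\<in>{1..q}. real (q choose l) *\<^sub>R cinner (LD l (U (q - l) j)) x)"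
  proof (rule sum.cong[OF refl])
    fix l assume "l \<in> {1..q}"
    then show "real (q choose l) *\<^sub>R cinner (U (q - l) j) (LD l x) =
               real (q choose l) *\<^sub>R cinner (LD l (U (q - l) j)) x"
      using LD_symmetric[OF UD x, of "q - l" l] by simp
  qed
  then have "(\<Sum>l\<le>q. real (q choose l) *\<^sub>R cinner (U (q - l) j) (LD l x)) =
      cinner (U q j) (L (complex_of_real lam0) x) +
      cinner (\<Sum>l\<in>{1..q}. real (q choose l) *\<^sub>R LD l (U (q - l) j)) x"
    by (subst sum_atMost_eq_head) (simp add: LD_0 cinner_sumR)
  moreover have "(\<Sum>l\<le>q. real (q choose l) *\<^sub>R (M l j *\<^sub>R cinner (U (q - l) j) x)) =
                 cinner (\<Sum>l\<le>q. real (q choose l) *\<^sub>R (M l j *\<^sub>R U (q - l) j)) x"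
    by (simp add: cinner_sumR cinner_scaleR_left scaleR_conv_of_real mult.assoc)
  ultimately have "cinner (U q j) (L (complex_of_real lam0) x) =
      cinner ((\<Sum>l\<le>q. real (q choose l) *\<^sub>R (M l j *\<^sub>R U (q - l) j)) -
              (\<Sum>l\<in>{1..q}. real (q choose l) *\<^sub>R LD l (U (q - l) j))) x"
    using Leibniz_eigen_identity[OF x, of q j] by (simp add: cinner_diff_left eq_diff_eq)
  then show ?thesis
    by (subst (1 2) cinner_commute) simp
qed

text \<open>The derivatives of the eigenvectors lie in the domain although only the eigenvectors
  themselves are assumed to: inductively, \<open>cinner (L lam0 x) (U q j)\<close> is a bounded functional
  of \<open>x\<close>, so \<open>U q j\<close> lies in the domain of the adjoint, which is \<open>D\<close>.\<close>
lemma U_in_D: "U n j \<in> D"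
proof (induction n rule: less_induct)
  case (less q)
  show ?case
    by (rule L_adjoint_domain, rule cinner_L_U[OF less.IH]) auto
qed

lemma e_in_D: "e j n \<in> D"
  using U_in_D D_subspace by (simp add: e_def csubspace_def)

lemma taylor_identity:
  "(\<Sum>l\<le>q. Ld l (e j (q - l))) = (\<Sum>l\<le>q. complex_of_real (mm j l) *\<^sub>C e j (q - l))"
proof (rule dense_cinner_eq[OF D_dense])
  fix v assume v: "v \<in> D"
  have bf: "(of_nat (q choose l) :: complex) = fact q / (fact l * fact (q - l))" if "l \<le> q" for l
    by (rule binomial_fact[OF that])
  have t1: "cinner (Ld l (e j (q - l))) v =
      complex_of_real (1 / fact q) * (real (q choose l) *\<^sub>R cinner (U (q - l) j) (LD l v))"
    if l: "l \<le> q" for l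
  proof -
    have "cinner (Ld l (e j (q - l))) v = (1 / fact l) * (1 / fact (q - l)) * cinner (LD l (U (q - l) j)) v"
      by (simp add: Ld_def e_def LD_scale U_in_D cinner_scaleC_left)
    also have "\<dots> = (1 / fact l) * (1 / fact (q - l)) * cinner (U (q - l) j) (LD l v)"
      by (simp add: LD_symmetric[OF U_in_D v])
    also have "\<dots> = complex_of_real (1 / fact q) * (real (q choose l) *\<^sub>R cinner (U (q - l) j) (LD l v))"
      by (simp add: scaleR_conv_of_real bf[OF l] field_simps)
    finally show ?thesis .
  qed
  have t2: "cinner (complex_of_real (mm j l) *\<^sub>C e j (q - l)) v =
      complex_of_real (1 / fact q) * (real (q choose l) *\<^sub>R (M l j *\<^sub>R cinner (U (q - l) j) v))"
    if l: "l \<le> q" for l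
  proof -
    have "cinner (complex_of_real (mm j l) *\<^sub>C e j (q - l)) v =
          complex_of_real (M l j) / fact l * (1 / fact (q - l)) * cinner (U (q - l) j) v"
      by (simp add: mm_def e_def cinner_scaleC_left)
    also have "\<dots> = complex_of_real (1 / fact q) * (real (q choose l) *\<^sub>R (M l j *\<^sub>R cinner (U (q - l) j) v))"
      by (simp add: scaleR_conv_of_real bf[OF l] field_simps)
    finally show ?thesis .
  qed
  have "cinner (\<Sum>l\<le>q. Ld l (e j (q - l))) v =
        complex_of_real (1 / fact q) * (\<Sum>l\<le>q. real (q choose l) *\<^sub>R cinner (U (q - l) j) (LD l v))"
    by (simp add: cinner_sum_left t1 sum_distrib_left)
  also have "\<dots> = complex_of_real (1 / fact q) * (\<Sum>l\<le>q. real (q choose l) *\<^sub>R (M l j *\<^sub>R cinner (U (q - l) j) v))"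
    by (simp only: Leibniz_eigen_identity[OF v])
  also have "\<dots> = cinner (\<Sum>l\<le>q. complex_of_real (mm j l) *\<^sub>C e j (q - l)) v"
    by (simp add: cinner_sum_left t2 sum_distrib_left)
  finally show "cinner (\<Sum>l\<le>q. Ld l (e j (q - l))) v = cinner (\<Sum>l\<le>q. complex_of_real (mm j l) *\<^sub>C e j (q - l)) v" .
qed

lemma cinner_Ld_0_e_0:
  assumes "x \<in> D"
  shows "cinner (Ld 0 x) (e i 0) = complex_of_real (\<mu> i lam0) * cinner x (e i 0)"
  using L_symmetric[OF lam0 assms, of "u i lam0"] eigen[OF lam0, of i]
  by (simp add: Ld_0 e_0 cinner_scaleC_right)

lemma Ld_0_orthogonal: "x \<in> D \<Longrightarrow> i \<in> J1 \<Longrightarrow> cinner (Ld 0 x) (e i 0) = 0"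
  by (simp add: cinner_Ld_0_e_0 J1_def)

lemma finite_J1: "finite J1"
proof -
  obtain F where F: "finite F" "cspan F = {x \<in> D. L (complex_of_real lam0) x = 0}"
    using kernel_finite_dim by blast
  show ?thesis
  proof (rule finite_orthonormal_in_span[of "\<lambda>j. u j lam0", OF orthonormal F(1)])
    fix j assume "j \<in> J1"
    then show "u j lam0 \<in> cspan F" using eigen[OF lam0, of j] F(2) by (simp add: J1_def)
  qed
qed

lemma kernel_expansion:
  assumes x: "x \<in> D" and Lx: "Ld 0 x = 0"
  shows "x = (\<Sum>j\<in>J1. cinner x (e j 0) *\<^sub>C e j 0)"
proof -
  define d where "d = x - (\<Sum>j\<in>J1. cinner x (e j 0) *\<^sub>C e j 0)"
  have "d = 0"
  proof (rule orth_span_zero[OF _ complete])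
    fix y assume "y \<in> range (\<lambda>j. u j lam0)"
    then obtain i where yi: "y = e i 0" by (auto simp: e_0)
    have "(\<Sum>j\<in>J1. cinner x (e j 0) * cinner (e j 0) (e i 0)) = (if i \<in> J1 then cinner x (e i 0) else 0)"
      using finite_J1 by (simp add: e_0 orthonormal if_distrib sum.delta cong: if_cong)
    moreover have "cinner x (e i 0) = 0" if "i \<notin> J1"
      using cinner_Ld_0_e_0[OF x, of i] that by (simp add: Lx J1_def)
    ultimately show "cinner d y = 0"
      by (auto simp: d_def yi cinner_diff_left cinner_sum_left cinner_scaleC_left)
  qed
  then show ?thesis by (simp add: d_def)
qed

sublocale chain: taylor_chain D Ld e mm J1
proof unfold_locales
  show "Ld l (x + y) = Ld l x + Ld l y" if "x \<in> D" "y \<in> D" for l x y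
    using LD_add[OF that] by (simp add: Ld_def complex_vector.scale_right_distrib)
  show "Ld l (c *\<^sub>C x) = c *\<^sub>C Ld l x" if "x \<in> D" for l c x
    using LD_scale[OF that] by (simp add: Ld_def scaleC_scaleC mult.commute)
  show "j \<in> J1 \<longleftrightarrow> mm j 0 = 0" for j
    by (simp add: J1_def mm_def M_def)
qed (use D_subspace e_in_D taylor_identity orthonormal finite_J1 kernel_expansion Ld_0_orthogonal
      in \<open>simp_all add: e_0\<close>)

lemma Yspace_eq: "Yspace \<mu> u lam0 s = chain.Y s"
proof -
  have "{u j lam0 | j. \<forall>n<s. nderiv n (\<mu> j) lam0 = 0} = {e j 0 | j. \<forall>n<s. mm j n = 0}"
    by (simp add: e_0 mm_def M_def)
  then show ?thesis by (simp add: Yspace_def chain.Y_def)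
qed

lemma root_chain_iff_is_chain:
  assumes "m \<ge> 1"
  shows "root_chain D L (complex_of_real lam0) m us \<longleftrightarrow> chain.is_chain m us \<and> us 0 \<noteq> 0"
proof -
  have "(\<Sum>l=0..q. (1 / fact l) *\<^sub>C (cderiv ^^ l) (\<lambda>z. L z (us (q - l))) (complex_of_real lam0)) =
        (\<Sum>l\<le>q. Ld l (us (q - l)))" for q
    by (simp add: Ld_def LD_def atLeast0AtMost)
  moreover have "(\<Sum>l\<le>0. Ld l (us (0 - l))) = L (complex_of_real lam0) (us 0)"
    by (simp add: Ld_0)
  moreover have "q < m \<longleftrightarrow> q = 0 \<or> (1 \<le> q \<and> q \<le> m - 1)" for q
    using assms by arith
  ultimately show ?thesis
    unfolding root_chain_def chain.is_chain_def by metis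
qed

lemma Uop_Vop_eq_E:
  assumes x: "x \<in> chain.ker0"
  shows "(1 / fact d) *\<^sub>C Uop d u lam0 (Vop u lam0 x) = chain.E d x"
proof -
  have "cinner x (u j lam0) = 0" if j: "j \<notin> J1" for j
  proof -
    have "cinner x (e j 0) = (\<Sum>i\<in>J1. cinner x (e i 0) * cinner (e i 0) (e j 0))"
      by (subst chain.ker0_eq_sum[OF x]) (simp add: cinner_sum_left cinner_scaleC_left)
    also have "\<dots> = 0" using j by (intro sum.neutral) (auto simp: e_0 orthonormal)
    finally show ?thesis by (simp add: e_0)
  qed
  then have "Uop d u lam0 (Vop u lam0 x) = (\<Sum>j\<in>J1. cinner x (u j lam0) *\<^sub>C U d j)"
    unfolding Uop_def Vop_def U_def by (intro suminf_finite[OF finite_J1]) simp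
  then show ?thesis
    by (simp add: chain.E_def e_def U_def complex_vector.scale_sum_right scaleC_scaleC mult.commute)
qed

lemma root_chain_start_iff:
  assumes m: "m \<ge> 1" and u0: "u0 \<noteq> 0"
  shows "(\<exists>us. root_chain D L (complex_of_real lam0) m us \<and> us 0 = u0) \<longleftrightarrow> u0 \<in> Yspace \<mu> u lam0 m"
proof
  assume "\<exists>us. root_chain D L (complex_of_real lam0) m us \<and> us 0 = u0"
  then obtain us where "chain.is_chain m us" and us0: "us 0 = u0"
    using root_chain_iff_is_chain[OF m] by blast
  then obtain w where wY: "\<forall>s<m. w s \<in> chain.Y (m - s)" and wr: "\<forall>r<m. us r = chain.chain_of w r"
    using chain.is_chain_imp_chain_of by blast
  have w0: "w 0 \<in> chain.Y m" using wY m by auto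
  then have "chain.chain_of w 0 = w 0"
    using chain.Y_subset_ker0[OF m] by (auto simp: chain.chain_of_def chain.E_0_ker0)
  then show "u0 \<in> Yspace \<mu> u lam0 m" using w0 wr m us0 by (auto simp: Yspace_eq)
next
  assume "u0 \<in> Yspace \<mu> u lam0 m"
  then have uY: "u0 \<in> chain.Y m" by (simp add: Yspace_eq)
  define w where "w s = (if s = 0 then u0 else 0)" for s :: nat
  have "chain.is_chain m (chain.chain_of w)"
    by (rule chain.is_chain_chain_of) (auto simp: w_def uY chain.Y_zero)
  moreover have "chain.chain_of w 0 = u0"
    using chain.Y_subset_ker0[OF m] uY by (auto simp: chain.chain_of_def w_def chain.E_0_ker0)
  ultimately show "\<exists>us. root_chain D L (complex_of_real lam0) m us \<and> us 0 = u0"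
    using root_chain_iff_is_chain[OF m] u0 by auto
qed

lemma root_chain_expansion:
  assumes m: "m \<ge> 1" and chain: "root_chain D L (complex_of_real lam0) m us"
  shows "\<exists>w. (\<forall>s<m. w s \<in> Yspace \<mu> u lam0 (m - s)) \<and>
             (\<forall>r<m. us r = (\<Sum>d=0..r. (1 / fact d) *\<^sub>C Uop d u lam0 (Vop u lam0 (w (r - d)))))"
proof -
  obtain w where wY: "\<forall>s<m. w s \<in> chain.Y (m - s)" and wr: "\<forall>r<m. us r = chain.chain_of w r"
    using chain chain.is_chain_imp_chain_of root_chain_iff_is_chain[OF m] by blast
  have "w s \<in> chain.ker0" if "s < m" for s
    using chain.Y_subset_ker0[of "m - s"] wY that by (simp add: subset_iff)
  then have "chain.chain_of w r = (\<Sum>d=0..r. (1 / fact d) *\<^sub>C Uop d u lam0 (Vop u lam0 (w (r - d))))"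
    if "r < m" for r
    using that by (auto simp: chain.chain_of_def atLeast0AtMost Uop_Vop_eq_E intro!: sum.cong)
  then show ?thesis using wY wr by (auto simp: Yspace_eq)
qed

end

theorem proposition2:
  fixes S :: "complex set" and D :: "'a::{complex_inner, complete_space} set"
    and L :: "complex \<Rightarrow> 'a \<Rightarrow> 'a"
    and \<mu> :: "nat \<Rightarrow> real \<Rightarrow> real" and u :: "nat \<Rightarrow> real \<Rightarrow> 'a"
    and lam0 :: real and k m :: nat
  assumes S_open: "open S" and S_conj: "cnj ` S = S"
    and D_dense: "closure D = UNIV"
    and L_hol: "holomorphic_family_A S D L"
    and L_sa: "selfadjoint_family S D L"
    and L_alt: "(\<forall>z\<in>S. has_compact_resolvent D (L z)) \<or>
       (\<exists>B. compact_selfadjoint_pencil S B \<and> D = UNIV \<and> (\<forall>z\<in>S. \<forall>x. L z x = x - B z x) \<and>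
            (\<forall>t. complex_of_real t \<in> S \<longrightarrow> (\<forall>x. B (complex_of_real t) x = 0 \<longrightarrow> x = 0)))"
    and mu_an: "\<forall>j. real_analytic_on (\<mu> j) {t. complex_of_real t \<in> S}"
    and u_an: "\<forall>j. real_analytic_on (u j) {t. complex_of_real t \<in> S}"
    and eig: "\<forall>t. complex_of_real t \<in> S \<longrightarrow>
       (\<forall>j. u j t \<in> D \<and> L (complex_of_real t) (u j t) = complex_of_real (\<mu> j t) *\<^sub>C u j t)"
    and onb: "\<forall>t. complex_of_real t \<in> S \<longrightarrow>
       (\<forall>i j. cinner (u i t) (u j t) = (if i = j then 1 else 0)) \<and>
       closure (cspan (range (\<lambda>j. u j t))) = UNIV"
    and lam0: "complex_of_real lam0 \<in> S"
    and mult: "has_cdim {x \<in> D. L (complex_of_real lam0) x = 0} k" and k_pos: "k > 0"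
    and m_pos: "m \<ge> 1"
  shows "(\<forall>u0. u0 \<noteq> 0 \<longrightarrow>
            ((\<exists>us. root_chain D L (complex_of_real lam0) m us \<and> us 0 = u0) \<longleftrightarrow> u0 \<in> Yspace \<mu> u lam0 m)) \<and>
         (\<forall>us. root_chain D L (complex_of_real lam0) m us \<longrightarrow>
            (\<exists>w. (\<forall>s<m. w s \<in> Yspace \<mu> u lam0 (m - s)) \<and>
                 (\<forall>r<m. us r = (\<Sum>d=0..r. (1 / fact d) *\<^sub>C Uop d u lam0 (Vop u lam0 (w (r - d)))))))"
proof -
  have D: "csubspace D" and hol: "\<And>x. x \<in> D \<Longrightarrow> vec_holomorphic_on (\<lambda>z. L z x) S"
    using L_hol by (auto simp: holomorphic_family_A_def)
  have adj: "is_adjoint_on D (L (complex_of_real t)) (L (complex_of_real t))"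
    if "complex_of_real t \<in> S" for t
  proof -
    have "\<forall>z\<in>S. is_adjoint_on D (L z) (L (cnj z))" using L_sa by (simp add: selfadjoint_family_def)
    from bspec[OF this that] show ?thesis by simp
  qed
  interpret analytic_eigenbasis S D L \<mu> u lam0
  proof
    show "cinner (L (complex_of_real t) x) v = cinner x (L (complex_of_real t) v)"
      if "complex_of_real t \<in> S" "x \<in> D" "v \<in> D" for t x v
      using adj[OF that(1)] that(2,3) unfolding is_adjoint_on_def by blast
    show "v \<in> D" if "\<And>x. x \<in> D \<Longrightarrow> cinner (L (complex_of_real lam0) x) v = cinner x w" for v w
      using adj[OF lam0] that unfolding is_adjoint_on_def by blast
    show "\<exists>F. finite F \<and> cspan F = {x \<in> D. L (complex_of_real lam0) x = 0}"
      using mult unfolding has_cdim_def by blast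
  qed (use S_open D D_dense hol mu_an u_an eig onb lam0 in blast)+
  show ?thesis
    using root_chain_start_iff[OF m_pos] root_chain_expansion[OF m_pos] by blast
qed

end
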